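(* Let $q$ be a prime power, $m\ge2$, $s,\ell,r_1,\dots,r_m\ge1$ integers, $k=m\ell-s$ with $k\ge\ell$, $n=\sum_{i=1}^m(\ell+r_i)$, $R=\sum_i r_i$. For $\alpha=(\alpha_{w,z})\in\mathbb{F}_q^{sk}$ and $\beta=(\beta_{t,i,j})\in\mathbb{F}_q^{\ell R}$ ($1\le w\le k$, $1\le z\le s$, $1\le t\le\ell$, $1\le i\le m$, $1\le j\le r_i$) let $G(\alpha,\beta)=(C_1\mid D_1\mid\dots\mid C_m\mid D_m)\in\mathbb{F}_q^{k\times n}$, where $(C_1\mid\dots\mid C_m)=[I_k\mid A]$ with $A=(\alpha_{w,z})\in\mathbb{F}_q^{k\times s}$, each $C_i$ has $\ell$ columns, and $D_i\in\mathbb{F}_q^{k\times r_i}$ has $j$-th column $\sum_{t=1}^\ell\beta_{t,i,j}C_i^{(t)}$, $C_i^{(t)}$ being the $t$-th column of $C_i$. If the entries of $\alpha$ and $\beta$ are chosen independently and uniformly at random in $\mathbb{F}_q$, then the probability that the row space of $G(\alpha,\beta)$ is an $[n,k,\ell;r_1,\dots,r_m]$-PMDS code is at least $$1-\frac{2(n-k)\binom{n-1}{k-1}}{q}.$$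
   Context: An $[n,k]$-MDS code over a field $\mathbb{F}$ is a linear code in $\mathbb{F}^n$ of dimension $k$ and minimum Hamming distance $n-k+1$. PMDS codes: let $\ell,m,r_1,\dots,r_m$ be positive integers, $n=\sum_{i=1}^m(r_i+\ell)$, and $C\subseteq\mathbb{F}^n$ a linear code of dimension $k<n$ with generator matrix $G=(B_1\mid\dots\mid B_m)$, $B_i\in\mathbb{F}^{k\times(r_i+\ell)}$ (here $B_i=(C_i\mid D_i)$). Then $C$ is an $[n,k,\ell;r_1,\dots,r_m]$-PMDS code if (i) for each $i$ the row space of $B_i$ is an $[r_i+\ell,\ell]$-MDS code, and (ii) for any choice of $r_i$ erased coordinates in the $i$-th block for every $i$, the code obtained from $C$ by puncturing these coordinates is an $[m\ell,k]$-MDS code. *)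

theory Defs
  imports Complex_Main "HOL-Library.FuncSet" "HOL-Library.Function_Algebras"
begin

(* Vectors of F^n are represented as functions nat => 'a that vanish outside the
   relevant coordinate set; a code is a set of such vectors. *)

definition sc :: "'a::field \<Rightarrow> (nat \<Rightarrow> 'a) \<Rightarrow> (nat \<Rightarrow> 'a)" where
  "sc c x = (\<lambda>j. c * x j)"

definition code_dim :: "(nat \<Rightarrow> 'a::field) set \<Rightarrow> nat" where
  "code_dim C = vector_space.dim sc C"

definition row_space :: "nat \<Rightarrow> nat \<Rightarrow> (nat \<Rightarrow> nat \<Rightarrow> 'a::field) \<Rightarrow> (nat \<Rightarrow> 'a) set" where
  "row_space K N G = {x. \<exists>c. x = (\<lambda>j. if j < N then (\<Sum>w<K. c w * G w j) else 0)}"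

definition hdist :: "nat set \<Rightarrow> (nat \<Rightarrow> 'a) \<Rightarrow> (nat \<Rightarrow> 'a) \<Rightarrow> nat" where
  "hdist S x y = card {j \<in> S. x j \<noteq> y j}"

definition min_dist :: "nat set \<Rightarrow> (nat \<Rightarrow> 'a) set \<Rightarrow> nat" where
  "min_dist S C = Inf {hdist S x y | x y. x \<in> C \<and> y \<in> C \<and> x \<noteq> y}"

definition restrict_code :: "nat set \<Rightarrow> (nat \<Rightarrow> 'a::zero) set \<Rightarrow> (nat \<Rightarrow> 'a) set" where
  "restrict_code S C = (\<lambda>x j. if j \<in> S then x j else 0) ` C"

definition is_MDS_on :: "nat set \<Rightarrow> nat \<Rightarrow> (nat \<Rightarrow> 'a::field) set \<Rightarrow> bool" where
  "is_MDS_on S K C \<longleftrightarrow> code_dim C = K \<and> min_dist S C = card S - K + 1"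

(* offset of block i (0-based); block i has l + r i columns *)
definition blk_off :: "nat \<Rightarrow> (nat \<Rightarrow> nat) \<Rightarrow> nat \<Rightarrow> nat" where
  "blk_off l r i = (\<Sum>i'<i. l + r i')"

definition blk :: "nat \<Rightarrow> (nat \<Rightarrow> nat) \<Rightarrow> nat \<Rightarrow> nat set" where
  "blk l r i = {blk_off l r i ..< blk_off l r i + l + r i}"

definition is_PMDS :: "nat \<Rightarrow> nat \<Rightarrow> nat \<Rightarrow> (nat \<Rightarrow> nat) \<Rightarrow> (nat \<Rightarrow> 'a::field) set \<Rightarrow> bool" where
  "is_PMDS k l m r C \<longleftrightarrow>
     (let n = (\<Sum>i<m. l + r i) in
       code_dim C = k \<and> k < n \<and>
       (\<forall>i<m. is_MDS_on (blk l r i) l (restrict_code (blk l r i) C)) \<and>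
       (\<forall>E :: nat \<Rightarrow> nat set. (\<forall>i<m. E i \<subseteq> blk l r i \<and> card (E i) = r i) \<longrightarrow>
          is_MDS_on ({0..<n} - (\<Union>i<m. E i)) k
                    (restrict_code ({0..<n} - (\<Union>i<m. E i)) C)))"

(* column c (c < m*l) of [I_k | A], A = (alpha(w,z)), k = m*l - s *)
definition Cmat :: "nat \<Rightarrow> (nat \<times> nat \<Rightarrow> 'a::field) \<Rightarrow> nat \<Rightarrow> nat \<Rightarrow> 'a" where
  "Cmat k \<alpha> w c = (if c < k then (if w = c then 1 else 0) else \<alpha> (w, c - k))"

(* G(alpha,beta) = (C_1 | D_1 | ... | C_m | D_m), row w, column c;
   D_i column j = sum_t beta(t,i,j) * (t-th column of C_i), all indices 0-based *)
definition genmat :: "nat \<Rightarrow> nat \<Rightarrow> nat \<Rightarrow> (nat \<Rightarrow> nat) \<Rightarrow>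
     (nat \<times> nat \<Rightarrow> 'a::field) \<Rightarrow> (nat \<times> nat \<times> nat \<Rightarrow> 'a) \<Rightarrow> nat \<Rightarrow> nat \<Rightarrow> 'a" where
  "genmat k l m r \<alpha> \<beta> w c =
     (if \<exists>i<m. c \<in> blk l r i then
        (let i = (THE i. i < m \<and> c \<in> blk l r i); p = c - blk_off l r i in
          if p < l then Cmat k \<alpha> w (i * l + p)
          else (\<Sum>t<l. \<beta> (t, i, p - l) * Cmat k \<alpha> w (i * l + t)))
      else 0)"

end

(*
  If, for every admissible set T of k columns (at most l of them in each block), the columns of
  G(alpha, beta) indexed by T are linearly independent, then every k columns surviving a
  puncturing, and every l columns of a single block, form an information set, so G(alpha, beta)
  generates a PMDS code.  For a fixed T the k x k minor on T is a polynomial in alpha and beta of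
  degree at most 2 |T - I|, where I is the set of columns of G carrying the identity part of
  [I_k | A]: entries of C-columns have degree at most 1, entries of D-columns degree at most 2.
  The minor is not identically zero: choosing beta so that every D-column of T copies a C-column
  of its block not in T, and then A so that the resulting k columns of [I_k | A] form a
  permutation matrix, makes it nonzero.  By Schwartz-Zippel it vanishes with probability at most
  2 |T - I| / q, and summing |T - I| over all k-subsets T of the n columns gives
  (n - k) (n - 1 choose k - 1).
*)

theory Submission
  imports Defs "HOL-Computational_Algebra.Polynomial" "Jordan_Normal_Form.Determinant"
begin

section \<open>Polynomial functions and the Schwartz--Zippel bound\<close>

text \<open>Polynomial functions of total degree at most \<open>d\<close> in the variables \<open>vs\<close>, by recursion on
  the variables: in powers of the first variable, the coefficient of \<open>x v ^ e\<close> is a polynomial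
  function of degree at most \<open>d - e\<close> in the remaining ones.\<close>

fun polyfun :: "'v list \<Rightarrow> nat \<Rightarrow> (('v \<Rightarrow> 'a::comm_ring_1) \<Rightarrow> 'a) \<Rightarrow> bool" where
  "polyfun [] d f \<longleftrightarrow> (\<exists>c. f = (\<lambda>_. c))"
| "polyfun (v # vs) d f \<longleftrightarrow> (\<exists>g. (\<forall>e. polyfun vs (d - e) (g e)) \<and> (\<forall>e>d. g e = (\<lambda>_. 0))
      \<and> f = (\<lambda>x. \<Sum>e\<le>d. x v ^ e * g e x))"

lemma polyfun_const: "polyfun vs d (\<lambda>_. c)"
proof (induction vs arbitrary: d c)
  case Nil
  then show ?case by auto
next
  case (Cons v vs)
  let ?g = "\<lambda>e _. if e = 0 then c else 0"
  have "(\<Sum>e\<le>d. x v ^ e * ?g e x) = (\<Sum>e\<le>d. if e = 0 then c else 0)" for x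
    by (rule sum.cong) auto
  then have "(\<lambda>_. c) = (\<lambda>x. \<Sum>e\<le>d. x v ^ e * ?g e x)"
    by simp
  with Cons.IH show ?case
    by (auto intro!: exI[of _ ?g])
qed

lemma polyfun_cong:
  assumes "polyfun vs d f" "\<forall>u\<in>set vs. x u = y u"
  shows "f x = f y"
  using assms
proof (induction vs arbitrary: d f)
  case Nil
  then show ?case by auto
next
  case (Cons v vs)
  then obtain g where g: "\<forall>e. polyfun vs (d - e) (g e)" "f = (\<lambda>x. \<Sum>e\<le>d. x v ^ e * g e x)"
    by auto
  have "g e x = g e y" for e
    using Cons.IH[OF g(1)[rule_format, of e]] Cons.prems(2) by auto
  then show ?case
    using g(2) Cons.prems(2) by simp
qed

lemma polyfun_mono:
  assumes "polyfun vs d f" "d \<le> d'"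
  shows "polyfun vs d' f"
  using assms
proof (induction vs arbitrary: d d' f)
  case Nil
  then show ?case by auto
next
  case (Cons v vs)
  then obtain g where g: "\<forall>e. polyfun vs (d - e) (g e)" "\<forall>e>d. g e = (\<lambda>_. 0)"
    "f = (\<lambda>x. \<Sum>e\<le>d. x v ^ e * g e x)"
    by auto
  have "(\<Sum>e\<le>d'. x v ^ e * g e x) = (\<Sum>e\<le>d. x v ^ e * g e x)" for x
    by (rule sum.mono_neutral_right) (use g(2) Cons.prems(2) in auto)
  moreover have "\<forall>e. polyfun vs (d' - e) (g e)"
    using g(1) Cons.IH Cons.prems(2) by (meson diff_le_mono)
  ultimately show ?case
    using g(2,3) Cons.prems(2) by (auto intro!: exI[of _ g])
qed

lemma polyfun_add:
  assumes "polyfun vs d f" "polyfun vs d h"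
  shows "polyfun vs d (\<lambda>x. f x + h x)"
  using assms
proof (induction vs arbitrary: d f h)
  case Nil
  then show ?case by auto
next
  case (Cons v vs)
  obtain g where g: "\<forall>e. polyfun vs (d - e) (g e)" "\<forall>e>d. g e = (\<lambda>_. 0)"
    "f = (\<lambda>x. \<Sum>e\<le>d. x v ^ e * g e x)"
    using Cons.prems(1) by auto
  obtain g' where g': "\<forall>e. polyfun vs (d - e) (g' e)" "\<forall>e>d. g' e = (\<lambda>_. 0)"
    "h = (\<lambda>x. \<Sum>e\<le>d. x v ^ e * g' e x)"
    using Cons.prems(2) by auto
  have "(\<lambda>x. f x + h x) = (\<lambda>x. \<Sum>e\<le>d. x v ^ e * (g e x + g' e x))"
    using g(3) g'(3) by (auto simp: sum.distrib algebra_simps)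
  then show ?case
    using g g' Cons.IH by (auto intro!: exI[of _ "\<lambda>e x. g e x + g' e x"])
qed

lemma polyfun_sum:
  assumes "finite S" "\<And>i. i \<in> S \<Longrightarrow> polyfun vs d (f i)"
  shows "polyfun vs d (\<lambda>x. \<Sum>i\<in>S. f i x)"
  using assms by (induction S rule: finite_induct) (simp_all add: polyfun_const polyfun_add del: polyfun.simps)

lemma polyfun_power_mult:
  assumes "polyfun vs d g"
  shows "polyfun (v # vs) (d + n) (\<lambda>x. x v ^ n * g x)"
proof -
  let ?g = "\<lambda>e x. if e = n then g x else 0"
  have "(\<Sum>e\<le>d + n. x v ^ e * ?g e x) = (\<Sum>e\<le>d + n. if e = n then x v ^ n * g x else 0)" for x
    by (rule sum.cong) auto
  then have "(\<lambda>x. x v ^ n * g x) = (\<lambda>x. \<Sum>e\<le>d + n. x v ^ e * ?g e x)"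
    by simp
  moreover have "polyfun vs (d + n - e) (?g e)" for e
    using assms by (cases "e = n") (simp_all add: polyfun_const del: polyfun.simps)
  ultimately show ?thesis
    by (auto intro!: exI[of _ ?g])
qed

lemma polyfun_mult:
  assumes "polyfun vs d f" "polyfun vs d' h"
  shows "polyfun vs (d + d') (\<lambda>x. f x * h x)"
  using assms
proof (induction vs arbitrary: d d' f h)
  case Nil
  then show ?case by auto
next
  case (Cons v vs)
  obtain g where g: "\<forall>e. polyfun vs (d - e) (g e)" "f = (\<lambda>x. \<Sum>e\<le>d. x v ^ e * g e x)"
    using Cons.prems(1) by auto
  obtain g' where g': "\<forall>e. polyfun vs (d' - e) (g' e)" "h = (\<lambda>x. \<Sum>e\<le>d'. x v ^ e * g' e x)"
    using Cons.prems(2) by auto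
  have expand: "(\<lambda>x. f x * h x) = (\<lambda>x. \<Sum>e\<le>d. \<Sum>e'\<le>d'. x v ^ (e + e') * (g e x * g' e' x))"
    unfolding g(2) g'(2) sum_product by (simp add: power_add mult_ac)
  have "polyfun (v # vs) (d + d') (\<lambda>x. x v ^ (e + e') * (g e x * g' e' x))"
    if "e \<le> d" "e' \<le> d'" for e e'
  proof -
    have "polyfun vs ((d - e) + (d' - e')) (\<lambda>x. g e x * g' e' x)"
      using Cons.IH g(1) g'(1) by auto
    from polyfun_power_mult[OF this, of v "e + e'"] show ?thesis
      using that by simp
  qed
  then show ?case
    unfolding expand by (intro polyfun_sum) auto
qed

lemma polyfun_prod:
  assumes "finite S" "\<And>i. i \<in> S \<Longrightarrow> polyfun vs (d i) (f i)"
  shows "polyfun vs (\<Sum>i\<in>S. d i) (\<lambda>x. \<Prod>i\<in>S. f i x)"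
  using assms by (induction S rule: finite_induct) (simp_all add: polyfun_const polyfun_mult del: polyfun.simps)

lemma polyfun_var:
  assumes "u \<in> set vs"
  shows "polyfun vs 1 (\<lambda>x::'v \<Rightarrow> 'a::comm_ring_1. x u)"
  using assms
proof (induction vs)
  case Nil
  then show ?case by simp
next
  case (Cons v vs)
  show ?case
  proof (cases "u = v")
    case True
    have "polyfun vs 0 (\<lambda>_. 1)"
      by (rule polyfun_const)
    from polyfun_power_mult[OF this, of v 1] show ?thesis
      using True by (simp del: polyfun.simps)
  next
    case False
    with Cons have "polyfun vs 1 (\<lambda>x::'v \<Rightarrow> 'a. x u)" by auto
    from polyfun_power_mult[OF this, of v 0] show ?thesis by (simp del: polyfun.simps)
  qed
qed

lemma card_roots_sum_powers_le:
  fixes c :: "nat \<Rightarrow> 'a::idom"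
  assumes "c d \<noteq> 0"
  shows "card {a. (\<Sum>e\<le>d. a ^ e * c e) = 0} \<le> d"
proof -
  define P where "P = (\<Sum>e\<le>d. monom (c e) e)"
  have "poly P a = (\<Sum>e\<le>d. a ^ e * c e)" for a
    by (simp add: P_def poly_sum poly_monom mult.commute)
  moreover have "P \<noteq> 0"
    using assms by (auto simp: P_def coeff_sum dest: arg_cong[of _ _ "\<lambda>p. coeff p d"])
  moreover have "degree P \<le> d"
    unfolding P_def by (rule degree_sum_le) (auto intro: order.trans[OF degree_monom_le])
  ultimately show ?thesis
    using card_poly_roots_bound[of P] by simp
qed

lemma card_PiE_insert_filter:
  fixes P :: "('v \<Rightarrow> 'a::finite) \<Rightarrow> bool"
  assumes "finite V" "v \<notin> V"
  shows "card {x \<in> insert v V \<rightarrow>\<^sub>E UNIV. P x} = (\<Sum>y\<in>V \<rightarrow>\<^sub>E UNIV. card {a. P (y(v := a))})"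
proof -
  let ?upd = "\<lambda>(y, a). y(v := a)"
  let ?S = "SIGMA y:V \<rightarrow>\<^sub>E UNIV. {a. P (y(v := a))}"
  have "{x \<in> insert v V \<rightarrow>\<^sub>E UNIV. P x} = ?upd ` ?S"
    by (auto simp: PiE_insert_eq)
  moreover have "inj_on ?upd ?S"
  proof (rule inj_onI, clarify)
    fix y a y' a'
    assume y: "y \<in> V \<rightarrow>\<^sub>E UNIV" "y' \<in> V \<rightarrow>\<^sub>E UNIV" and eq: "y(v := a) = y'(v := a')"
    then have "y = y'"
      using assms(2) by (intro PiE_ext[OF y]) (metis fun_upd_other)
    then show "y = y' \<and> a = a'"
      using fun_cong[OF eq, of v] by simp
  qed
  ultimately show ?thesis
    using assms(1) by (simp add: card_image finite_PiE)
qed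

theorem schwartz_zippel:
  fixes f :: "('v \<Rightarrow> 'a::{finite,field}) \<Rightarrow> 'a"
  assumes "distinct vs" "polyfun vs d f" "f x0 \<noteq> 0"
  shows "card {x \<in> set vs \<rightarrow>\<^sub>E UNIV. f x = 0} * card (UNIV :: 'a set) \<le> d * card (UNIV :: 'a set) ^ length vs"
  using assms
proof (induction vs arbitrary: d f x0)
  case Nil
  then show ?case by auto
next
  case (Cons v vs)
  let ?q = "card (UNIV :: 'a set)" and ?Y = "set vs \<rightarrow>\<^sub>E (UNIV :: 'a set)"
  obtain g where g: "\<forall>e. polyfun vs (d - e) (g e)" "\<forall>e>d. g e = (\<lambda>_. 0)"
    "f = (\<lambda>x. \<Sum>e\<le>d. x v ^ e * g e x)"
    using Cons.prems(2) by auto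
  define E where "E = {e. e \<le> d \<and> (\<exists>x. g e x \<noteq> 0)}"
  have "E \<noteq> {}"
    using Cons.prems(3) g(3) by (auto simp: E_def intro: ccontr)
  define es where "es = Max E"
  have "es \<in> E"
    unfolding es_def using \<open>E \<noteq> {}\<close> by (intro Max_in) (auto simp: E_def)
  then obtain x1 where "es \<le> d" "g es x1 \<noteq> 0"
    by (auto simp: E_def)
  have above_es: "g e x = 0" if "e > es" for e x
    using that g(2) Max_ge[of E e] by (fastforce simp: E_def es_def)
  \<comment> \<open>For fixed values of the other variables, \<open>f\<close> is a polynomial of degree \<open>es\<close> in \<open>x v\<close>
      unless its leading coefficient \<open>g es\<close> vanishes.\<close>
  have roots: "card {a. f (y(v := a)) = 0} \<le> (if g es y = 0 then ?q else es)" for y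
  proof (cases "g es y = 0")
    case False
    have "g e (y(v := a)) = g e y" for e a
      using polyfun_cong[OF g(1)[rule_format, of e]] Cons.prems(1) by auto
    then have "f (y(v := a)) = (\<Sum>e\<le>es. a ^ e * g e y)" for a
      unfolding g(3) using \<open>es \<le> d\<close> above_es
      by (simp add: sum.mono_neutral_right[of "{..d}" "{..es}"])
    then show ?thesis
      using card_roots_sum_powers_le[of "\<lambda>e. g e y" es] False by simp
  qed (simp add: card_mono)
  have "card {x \<in> set (v # vs) \<rightarrow>\<^sub>E UNIV. f x = 0} = (\<Sum>y\<in>?Y. card {a. f (y(v := a)) = 0})"
    using Cons.prems(1) by (simp add: card_PiE_insert_filter)
  also have "\<dots> \<le> (\<Sum>y\<in>?Y. ?q * of_bool (g es y = 0) + es)"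
    by (intro sum_mono order.trans[OF roots]) auto
  also have "\<dots> = ?q * card {y \<in> ?Y. g es y = 0} + es * ?q ^ length vs"
    using Cons.prems(1) by (simp add: sum.distrib sum_distrib_left[symmetric] card_PiE distinct_card finite_PiE Collect_conj_eq Int_commute)
  finally have "card {x \<in> set (v # vs) \<rightarrow>\<^sub>E UNIV. f x = 0} * ?q
      \<le> (?q * card {y \<in> ?Y. g es y = 0} + es * ?q ^ length vs) * ?q"
    by (rule mult_right_mono) simp
  also have "\<dots> = ?q * (card {y \<in> ?Y. g es y = 0} * ?q) + es * ?q ^ Suc (length vs)"
    by (simp add: algebra_simps)
  also have "\<dots> \<le> ?q * ((d - es) * ?q ^ length vs) + es * ?q ^ Suc (length vs)"
    using Cons.IH[OF _ g(1)[rule_format, of es] \<open>g es x1 \<noteq> 0\<close>] Cons.prems(1) by simp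
  also have "\<dots> = d * ?q ^ length (v # vs)"
    using \<open>es \<le> d\<close> by (simp add: algebra_simps)
  finally show ?case .
qed

section \<open>Information sets and MDS codes\<close>

global_interpretation code_space: vector_space "sc :: 'a::field \<Rightarrow> (nat \<Rightarrow> 'a) \<Rightarrow> nat \<Rightarrow> 'a"
  by unfold_locales (auto simp: sc_def algebra_simps fun_eq_iff)

lemma sum_fun_apply: "(\<Sum>v\<in>A. F v) j = (\<Sum>v\<in>A. F v j)"
  by (induction A rule: infinite_finite_induct) auto

definition information_set :: "nat set \<Rightarrow> (nat \<Rightarrow> 'a) set \<Rightarrow> bool" where
  "information_set U C \<longleftrightarrow> bij_betw (\<lambda>x. restrict x U) C (U \<rightarrow>\<^sub>E UNIV)"

lemma information_set_unit_words:
  fixes C :: "(nat \<Rightarrow> 'a::field) set"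
  assumes "information_set U C"
  obtains b where "\<And>u. u \<in> U \<Longrightarrow> b u \<in> C"
    "\<And>u j. u \<in> U \<Longrightarrow> j \<in> U \<Longrightarrow> b u j = (if j = u then 1 else 0)"
proof -
  have "\<forall>u\<in>U. \<exists>b. b \<in> C \<and> restrict b U = (\<lambda>j\<in>U. if j = u then 1 else 0)"
  proof
    fix u
    have "(\<lambda>j\<in>U. if j = u then 1 else 0) \<in> (\<lambda>x. restrict x U) ` C"
      using assms by (simp add: information_set_def bij_betw_def)
    then show "\<exists>b. b \<in> C \<and> restrict b U = (\<lambda>j\<in>U. if j = u then 1 else 0)"
      by auto
  qed
  then obtain b where bC: "\<And>u. u \<in> U \<Longrightarrow> b u \<in> C"
    and b: "\<And>u. u \<in> U \<Longrightarrow> restrict (b u) U = (\<lambda>j\<in>U. if j = u then 1 else 0)"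
    by (auto dest!: bchoice)
  have "b u j = (if j = u then 1 else 0)" if "u \<in> U" "j \<in> U" for u j
    using fun_cong[OF b[OF that(1)], of j] that(2) by simp
  with bC show ?thesis
    by (rule that)
qed

lemma code_dim_eq_card_information_set:
  fixes C :: "(nat \<Rightarrow> 'a::field) set"
  assumes C: "code_space.subspace C" and "finite U" and info: "information_set U C"
  shows "code_dim C = card U"
proof -
  obtain b where bC: "\<And>u. u \<in> U \<Longrightarrow> b u \<in> C"
    and b: "\<And>u j. u \<in> U \<Longrightarrow> j \<in> U \<Longrightarrow> b u j = (if j = u then 1 else 0)"
    using information_set_unit_words[OF info] by blast
  have restrict_inj: "inj_on (\<lambda>x. restrict x U) C"
    using info by (simp add: information_set_def bij_betw_def)
  have inj: "inj_on b U"
  proof (rule inj_onI)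
    fix u u' assume "u \<in> U" "u' \<in> U" "b u = b u'"
    then have "b u u = b u' u" by simp
    with \<open>u \<in> U\<close> \<open>u' \<in> U\<close> show "u = u'" by (simp add: b split: if_splits)
  qed
  have eval: "(\<Sum>u\<in>U. c u * b u j) = c j" if "j \<in> U" for c j
  proof -
    have "(\<Sum>u\<in>U. c u * b u j) = (\<Sum>u\<in>U. if u = j then c j else 0)"
      using that by (intro sum.cong) (auto simp: b)
    then show ?thesis
      using that \<open>finite U\<close> by simp
  qed
  have "code_space.independent (b ` U)"
  proof -
    have "c (b j) = 0" if "(\<Sum>v\<in>b ` U. sc (c v) v) = 0" "j \<in> U" for c j
      using fun_cong[OF that(1), of j] eval[OF that(2), of "c \<circ> b"]
      by (simp add: sum.reindex[OF inj] sc_def sum_fun_apply)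
    then show ?thesis
      using \<open>finite U\<close> by (auto simp: code_space.dependent_finite)
  qed
  moreover have "code_space.span (b ` U) = C"
  proof
    show "code_space.span (b ` U) \<subseteq> C"
      using bC by (intro code_space.span_minimal[OF _ C]) auto
    show "C \<subseteq> code_space.span (b ` U)"
    proof
      fix x assume "x \<in> C"
      define y where "y = (\<Sum>u\<in>U. sc (x u) (b u))"
      have y_span: "y \<in> code_space.span (b ` U)"
        unfolding y_def by (intro code_space.span_sum code_space.span_scale code_space.span_base) auto
      have "y \<in> C"
        using bC unfolding y_def by (intro code_space.subspace_sum code_space.subspace_scale C)
      moreover have "restrict y U = restrict x U"
        using eval[of _ x] by (auto simp: y_def sc_def sum_fun_apply)
      ultimately have "y = x"
        using inj_onD[OF restrict_inj] \<open>x \<in> C\<close> by blast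
      with y_span show "x \<in> code_space.span (b ` U)" by simp
    qed
  qed
  ultimately have "code_space.dim C = card (b ` U)"
    using code_space.dim_span[of "b ` U"] code_space.dim_eq_card_independent[of "b ` U"] by simp
  then show ?thesis
    unfolding code_dim_def using card_image[OF inj] by simp
qed

lemma hdist_ge_if_information_sets:
  assumes "finite S" "K \<le> card S" "x \<in> C" "y \<in> C" "x \<noteq> y"
    and info: "\<And>U. U \<subseteq> S \<Longrightarrow> card U = K \<Longrightarrow> information_set U C"
  shows "card S - K + 1 \<le> hdist S x y"
proof -
  define Z where "Z = {j \<in> S. x j = y j}"
  have "card Z < K"
  proof (rule ccontr)
    assume "\<not> card Z < K"
    then obtain U where U: "U \<subseteq> Z" "card U = K"
      using obtain_subset_with_card_n[of K Z] by auto
    then have "U \<subseteq> S" "restrict x U = restrict y U"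
      unfolding Z_def by (auto simp: fun_eq_iff)
    with info[of U] U(2) assms(3,4) have "x = y"
      unfolding information_set_def bij_betw_def by (blast dest: inj_onD)
    with assms(5) show False ..
  qed
  have "{j \<in> S. x j \<noteq> y j} = S - Z"
    by (auto simp: Z_def)
  then have "hdist S x y = card S - card Z"
    unfolding hdist_def using \<open>finite S\<close> by (simp add: Z_def card_Diff_subset)
  with \<open>card Z < K\<close> assms(2) show ?thesis
    by linarith
qed

lemma is_MDS_on_if_information_sets:
  fixes C :: "(nat \<Rightarrow> 'a::field) set"
  assumes C: "code_space.subspace C" and "finite S" and K: "1 \<le> K" "K \<le> card S"
    and info: "\<And>U. U \<subseteq> S \<Longrightarrow> card U = K \<Longrightarrow> information_set U C"
  shows "is_MDS_on S K C"
proof -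
  obtain U where U: "U \<subseteq> S" "card U = K"
    using obtain_subset_with_card_n[OF K(2)] by auto
  have "finite U"
    using U(1) \<open>finite S\<close> finite_subset by auto
  then obtain u where "u \<in> U"
    using U(2) K(1) by fastforce
  have "(\<lambda>j\<in>U. if j = u then 1 else 0) \<in> (\<lambda>x. restrict x U) ` C"
    using info[OF U] by (simp add: information_set_def bij_betw_def)
  then obtain x where "x \<in> C" and x: "restrict x U = (\<lambda>j\<in>U. if j = u then 1 else 0)"
    by auto
  have "x u = 1"
    using fun_cong[OF x, of u] \<open>u \<in> U\<close> by simp
  have "x j = 0" if "j \<in> U - {u}" for j
    using fun_cong[OF x, of j] that by simp
  \<comment> \<open>the Singleton bound is attained by \<open>x\<close> and the zero word\<close>
  then have "hdist S x 0 \<le> card (S - (U - {u}))"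
    unfolding hdist_def using \<open>finite S\<close> by (intro card_mono) auto
  also have "\<dots> = card S - (K - 1)"
    using U \<open>finite U\<close> \<open>u \<in> U\<close> by (subst card_Diff_subset) auto
  also have "\<dots> = card S - K + 1"
    using K by simp
  finally have "hdist S x 0 \<le> card S - K + 1" .
  moreover have lower: "card S - K + 1 \<le> hdist S y z" if "y \<in> C" "z \<in> C" "y \<noteq> z" for y z
    by (rule hdist_ge_if_information_sets[OF \<open>finite S\<close> K(2) that]) (rule info)
  moreover have "0 \<in> C" "x \<noteq> 0"
    using code_space.subspace_0[OF C] \<open>x u = 1\<close> by auto
  ultimately have "min_dist S C = card S - K + 1"
    unfolding min_dist_def using \<open>x \<in> C\<close>
    by (intro cInf_eq_minimum) (blast intro: order.antisym)+
  moreover have "code_dim C = K"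
    using code_dim_eq_card_information_set[OF C \<open>finite U\<close> info[OF U]] U(2) by simp
  ultimately show ?thesis
    unfolding is_MDS_on_def by simp
qed

definition row_comb :: "nat \<Rightarrow> nat \<Rightarrow> (nat \<Rightarrow> nat \<Rightarrow> 'a::field) \<Rightarrow> (nat \<Rightarrow> 'a) \<Rightarrow> nat \<Rightarrow> 'a" where
  "row_comb k N G c = (\<lambda>j. if j < N then (\<Sum>w<k. c w * G w j) else 0)"

definition independent_cols :: "nat \<Rightarrow> (nat \<Rightarrow> nat \<Rightarrow> 'a::field) \<Rightarrow> nat set \<Rightarrow> bool" where
  "independent_cols k G T \<longleftrightarrow> (\<forall>c. (\<forall>j\<in>T. (\<Sum>w<k. c w * G w j) = 0) \<longrightarrow> (\<forall>w<k. c w = 0))"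

lemma mem_restrict_code_row_space:
  "x \<in> restrict_code S (row_space k N G) \<longleftrightarrow> (\<exists>c. x = (\<lambda>j. if j \<in> S then row_comb k N G c j else 0))"
  unfolding restrict_code_def row_space_def row_comb_def by auto

lemma subspace_restrict_code_row_space:
  "code_space.subspace (restrict_code S (row_space k N G))"
proof (rule code_space.subspaceI)
  let ?comb = "\<lambda>c j. if j \<in> S then row_comb k N G c j else 0"
  show "0 \<in> restrict_code S (row_space k N G)"
    unfolding mem_restrict_code_row_space
    by (intro exI[of _ 0]) (auto simp: row_comb_def fun_eq_iff)
  fix x y a
  assume "x \<in> restrict_code S (row_space k N G)"
  then obtain c where x: "x = ?comb c"
    unfolding mem_restrict_code_row_space by blast
  then show "sc a x \<in> restrict_code S (row_space k N G)"
    unfolding mem_restrict_code_row_space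
    by (intro exI[of _ "\<lambda>w. a * c w"]) (auto simp: sc_def row_comb_def sum_distrib_left mult.assoc)
  assume "y \<in> restrict_code S (row_space k N G)"
  then obtain c' where y: "y = ?comb c'"
    unfolding mem_restrict_code_row_space by blast
  show "x + y \<in> restrict_code S (row_space k N G)"
    unfolding mem_restrict_code_row_space x y
    by (intro exI[of _ "c + c'"]) (auto simp: row_comb_def sum.distrib distrib_right fun_eq_iff)
qed

lemma restrict_code_row_space_full: "restrict_code {0..<N} (row_space k N G) = row_space k N G"
proof -
  have "(\<lambda>j. if j \<in> {0..<N} then x j else 0) = x" if "x \<in> row_space k N G" for x
    using that unfolding row_space_def by auto
  then show ?thesis
    unfolding restrict_code_def by (simp cong: image_cong)
qed

lemma independent_cols_eqD:
  assumes "independent_cols k G T" "\<forall>j\<in>T. (\<Sum>w<k. c w * G w j) = (\<Sum>w<k. c' w * G w j)"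
  shows "\<forall>w<k. c w = c' w"
proof -
  have "\<forall>j\<in>T. (\<Sum>w<k. (c w - c' w) * G w j) = 0"
    using assms(2) by (simp add: left_diff_distrib sum_subtractf)
  then show ?thesis
    using spec[OF assms(1)[unfolded independent_cols_def], of "\<lambda>w. c w - c' w"] by simp
qed

lemma independent_cols_solvable:
  fixes G :: "nat \<Rightarrow> nat \<Rightarrow> 'a::{finite,field}"
  assumes indep: "independent_cols k G T" and "finite T" "card T = k" and "z \<in> T \<rightarrow>\<^sub>E UNIV"
  shows "\<exists>c. \<forall>j\<in>T. (\<Sum>w<k. c w * G w j) = z j"
proof -
  define \<Phi> where "\<Phi> c = (\<lambda>j\<in>T. \<Sum>w<k. c w * G w j)" for c
  let ?A = "{0..<k} \<rightarrow>\<^sub>E (UNIV :: 'a set)"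
  have "inj_on \<Phi> ?A"
  proof (rule inj_onI)
    fix c c' assume "c \<in> ?A" "c' \<in> ?A" and eq: "\<Phi> c = \<Phi> c'"
    have "\<forall>j\<in>T. (\<Sum>w<k. c w * G w j) = (\<Sum>w<k. c' w * G w j)"
    proof
      fix j assume "j \<in> T"
      then show "(\<Sum>w<k. c w * G w j) = (\<Sum>w<k. c' w * G w j)"
        using fun_cong[OF eq, of j] by (simp add: \<Phi>_def)
    qed
    then have "\<forall>w<k. c w = c' w"
      by (rule independent_cols_eqD[OF indep])
    with \<open>c \<in> ?A\<close> \<open>c' \<in> ?A\<close> show "c = c'"
      by (intro PiE_ext) auto
  qed
  then have "card (\<Phi> ` ?A) = card (T \<rightarrow>\<^sub>E (UNIV :: 'a set))"
    using assms(2,3) by (simp add: card_image card_PiE)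
  moreover have "\<Phi> ` ?A \<subseteq> T \<rightarrow>\<^sub>E UNIV"
    unfolding \<Phi>_def by auto
  ultimately have "\<Phi> ` ?A = T \<rightarrow>\<^sub>E UNIV"
    using assms(2) by (intro card_subset_eq) (simp_all add: finite_PiE)
  with assms(4) obtain c where "z = \<Phi> c"
    by blast
  then show ?thesis
    by (auto simp: \<Phi>_def)
qed

lemma restrict_row_space_onto:
  fixes G :: "nat \<Rightarrow> nat \<Rightarrow> 'a::{finite,field}"
  assumes indep: "independent_cols k G T" and "finite T" "card T = k"
    and "U \<subseteq> T" "U \<subseteq> S" "T \<subseteq> {0..<N}"
  shows "(\<lambda>x. restrict x U) ` restrict_code S (row_space k N G) = U \<rightarrow>\<^sub>E UNIV"
proof
  show "(\<lambda>x. restrict x U) ` restrict_code S (row_space k N G) \<subseteq> U \<rightarrow>\<^sub>E UNIV"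
    by auto
  show "U \<rightarrow>\<^sub>E UNIV \<subseteq> (\<lambda>x. restrict x U) ` restrict_code S (row_space k N G)"
  proof
    fix z :: "nat \<Rightarrow> 'a" assume z: "z \<in> U \<rightarrow>\<^sub>E UNIV"
    obtain c where c: "\<forall>j\<in>T. (\<Sum>w<k. c w * G w j) = (if j \<in> U then z j else 0)"
      using independent_cols_solvable[OF indep assms(2,3), of "\<lambda>j\<in>T. if j \<in> U then z j else 0"]
      by auto
    define x where "x = (\<lambda>j. if j \<in> S then row_comb k N G c j else 0)"
    have "x \<in> restrict_code S (row_space k N G)"
      unfolding mem_restrict_code_row_space x_def by blast
    moreover have "restrict x U = z"
    proof
      fix j
      show "restrict x U j = z j"
        using c z assms(4-6) by (cases "j \<in> U") (auto simp: x_def row_comb_def PiE_def extensional_def)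
    qed
    ultimately show "z \<in> (\<lambda>x. restrict x U) ` restrict_code S (row_space k N G)"
      by blast
  qed
qed

lemma information_set_if_independent_cols:
  fixes G :: "nat \<Rightarrow> nat \<Rightarrow> 'a::{finite,field}"
  assumes indep: "independent_cols k G T" and "finite T" "card T = k" "T \<subseteq> S" "T \<subseteq> {0..<N}"
  shows "information_set T (restrict_code S (row_space k N G))"
  unfolding information_set_def bij_betw_def
proof
  show "inj_on (\<lambda>x. restrict x T) (restrict_code S (row_space k N G))"
  proof (rule inj_onI)
    fix x y
    assume "x \<in> restrict_code S (row_space k N G)" "y \<in> restrict_code S (row_space k N G)"
      and eq: "restrict x T = restrict y T"
    then obtain c c' where x: "x = (\<lambda>j. if j \<in> S then row_comb k N G c j else 0)"
      and y: "y = (\<lambda>j. if j \<in> S then row_comb k N G c' j else 0)"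
      unfolding mem_restrict_code_row_space by auto
    have "\<forall>j\<in>T. (\<Sum>w<k. c w * G w j) = (\<Sum>w<k. c' w * G w j)"
    proof
      fix j assume "j \<in> T"
      then have "x j = y j" "j \<in> S" "j < N"
        using fun_cong[OF eq, of j] assms(4,5) by auto
      then show "(\<Sum>w<k. c w * G w j) = (\<Sum>w<k. c' w * G w j)"
        by (simp add: x y row_comb_def)
    qed
    then have "\<forall>w<k. c w = c' w"
      by (rule independent_cols_eqD[OF indep])
    then have "row_comb k N G c = row_comb k N G c'"
      unfolding row_comb_def by (intro ext if_cong refl sum.cong) auto
    then show "x = y"
      unfolding x y by (rule arg_cong[where f="\<lambda>r j. if j \<in> S then r j else 0"])
  qed
  show "(\<lambda>x. restrict x T) ` restrict_code S (row_space k N G) = T \<rightarrow>\<^sub>E UNIV"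
    using restrict_row_space_onto[OF assms(1-3) order_refl assms(4,5)] .
qed

section \<open>The block structure of the generator matrix\<close>

lemma blk_off_Suc: "blk_off l r (Suc i) = blk_off l r i + l + r i"
  by (simp add: blk_off_def)

lemma blk_off_mono: "i \<le> j \<Longrightarrow> blk_off l r i \<le> blk_off l r j"
  unfolding blk_off_def by (rule sum_mono2) auto

lemma blk_off_eq: "blk_off l r m = m * l + (\<Sum>i<m. r i)"
  by (simp add: blk_off_def sum.distrib)

lemma blk_eq: "blk l r i = {blk_off l r i..<blk_off l r (Suc i)}"
  by (simp add: blk_def blk_off_Suc)

lemma card_blk: "card (blk l r i) = l + r i"
  by (simp add: blk_def)

lemma blk_disjoint:
  assumes "i \<noteq> j"
  shows "blk l r i \<inter> blk l r j = {}"
proof (cases "i < j")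
  case True
  then have "blk_off l r (Suc i) \<le> blk_off l r j"
    by (intro blk_off_mono) simp
  then show ?thesis
    unfolding blk_eq by auto
next
  case False
  with assms have "blk_off l r (Suc j) \<le> blk_off l r i"
    by (intro blk_off_mono) simp
  then show ?thesis
    unfolding blk_eq by auto
qed

lemma blk_subset: "i < m \<Longrightarrow> blk l r i \<subseteq> {0..<blk_off l r m}"
  using blk_off_mono[of "Suc i" m l r] unfolding blk_eq by auto

lemma ex_blk: "c < blk_off l r m \<Longrightarrow> \<exists>i<m. c \<in> blk l r i"
proof (induction m)
  case 0
  then show ?case by (simp add: blk_off_def)
next
  case (Suc m)
  show ?case
  proof (cases "c < blk_off l r m")
    case True
    then show ?thesis
      using Suc.IH less_SucI by blast
  next
    case False
    then have "c \<in> blk l r m"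
      using Suc.prems unfolding blk_eq by auto
    then show ?thesis
      by blast
  qed
qed

lemma blk_cases:
  assumes "c \<in> blk l r i"
  obtains p where "c = blk_off l r i + p" "p < l + r i"
  using assms that[of "c - blk_off l r i"] by (auto simp: blk_def)

lemma the_blk_eq:
  assumes "i < m" "c \<in> blk l r i"
  shows "(THE i'. i' < m \<and> c \<in> blk l r i') = i"
proof (rule the_equality)
  show "i < m \<and> c \<in> blk l r i"
    using assms by simp
  fix i' assume "i' < m \<and> c \<in> blk l r i'"
  then show "i' = i"
    using blk_disjoint[of i' i l r] assms(2) by blast
qed

lemma genmat_blk_off:
  assumes "i < m" "p < l + r i"
  shows "genmat k l m r \<alpha> \<beta> w (blk_off l r i + p) =
    (if p < l then Cmat k \<alpha> w (i * l + p) else (\<Sum>t<l. \<beta> (t, i, p - l) * Cmat k \<alpha> w (i * l + t)))"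
proof -
  have c: "blk_off l r i + p \<in> blk l r i"
    using assms(2) by (simp add: blk_def)
  then have "\<exists>i'<m. blk_off l r i + p \<in> blk l r i'"
    using assms(1) by blast
  then show ?thesis
    unfolding genmat_def Let_def the_blk_eq[OF assms(1) c] by simp
qed

definition blk_idx :: "nat \<Rightarrow> (nat \<Rightarrow> nat) \<Rightarrow> nat \<Rightarrow> nat \<Rightarrow> nat" where
  "blk_idx l r m c = (THE i. i < m \<and> c \<in> blk l r i)"

definition blk_pos :: "nat \<Rightarrow> (nat \<Rightarrow> nat) \<Rightarrow> nat \<Rightarrow> nat \<Rightarrow> nat" where
  "blk_pos l r m c = c - blk_off l r (blk_idx l r m c)"

lemma blk_idx_pos:
  assumes "c < blk_off l r m"
  shows "blk_idx l r m c < m" "blk_pos l r m c < l + r (blk_idx l r m c)"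
    "blk_off l r (blk_idx l r m c) + blk_pos l r m c = c"
proof -
  obtain i where "i < m" "c \<in> blk l r i"
    using ex_blk[OF assms] by blast
  moreover from this have "blk_idx l r m c = i"
    unfolding blk_idx_def by (rule the_blk_eq)
  ultimately show "blk_idx l r m c < m" "blk_pos l r m c < l + r (blk_idx l r m c)"
    "blk_off l r (blk_idx l r m c) + blk_pos l r m c = c"
    by (auto simp: blk_pos_def blk_def)
qed

definition ccol :: "nat \<Rightarrow> (nat \<Rightarrow> nat) \<Rightarrow> nat \<Rightarrow> nat \<Rightarrow> nat" where
  "ccol l r i p = blk_off l r i + p"

definition ccols :: "nat \<Rightarrow> (nat \<Rightarrow> nat) \<Rightarrow> nat set \<Rightarrow> nat set" where
  "ccols l r A = (\<lambda>(i, p). ccol l r i p) ` (A \<times> {0..<l})"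

lemma ccol_in_blk_iff:
  assumes "p < l"
  shows "ccol l r i' p \<in> blk l r i \<longleftrightarrow> i' = i"
proof
  have "ccol l r i' p \<in> blk l r i'"
    using assms by (simp add: ccol_def blk_def)
  then show "ccol l r i' p \<in> blk l r i \<Longrightarrow> i' = i"
    using blk_disjoint[of i' i l r] by blast
  show "i' = i \<Longrightarrow> ccol l r i' p \<in> blk l r i"
    using assms by (simp add: ccol_def blk_def)
qed

lemma inj_on_ccol: "inj_on (\<lambda>(i, p). ccol l r i p) (A \<times> {0..<l})"
proof (rule inj_onI, clarify)
  fix i p i' p' assume "p \<in> {0..<l}" "p' \<in> {0..<l}" and eq: "ccol l r i p = ccol l r i' p'"
  then have "i = i'"
    using ccol_in_blk_iff[of p l r i i'] ccol_in_blk_iff[of p' l r i' i'] by auto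
  with eq show "i = i' \<and> p = p'"
    by (simp add: ccol_def)
qed

lemma card_ccols: "finite A \<Longrightarrow> card (ccols l r A) = card A * l"
  unfolding ccols_def by (simp add: card_image[OF inj_on_ccol] card_cartesian_product)

lemma ccols_subset: "A \<subseteq> {..<m} \<Longrightarrow> ccols l r A \<subseteq> {0..<blk_off l r m}"
proof (unfold ccols_def, rule image_subsetI, clarify)
  fix i p assume "A \<subseteq> {..<m}" "i \<in> A" "p \<in> {0..<l}"
  then have "ccol l r i p \<in> blk l r i" "i < m"
    by (auto simp: ccol_def blk_def)
  then show "ccol l r i p \<in> {0..<blk_off l r m}"
    using blk_subset[of i m l r] by blast
qed

lemma card_ccols_Int_blk_le:
  assumes "X \<subseteq> ccols l r A"
  shows "card (X \<inter> blk l r i) \<le> l"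
proof -
  have "X \<inter> blk l r i \<subseteq> ccol l r i ` {0..<l}"
  proof
    fix x assume x: "x \<in> X \<inter> blk l r i"
    then obtain i' p where "x = ccol l r i' p" "p < l"
      using assms by (auto simp: ccols_def)
    with x show "x \<in> ccol l r i ` {0..<l}"
      using ccol_in_blk_iff by auto
  qed
  then have "card (X \<inter> blk l r i) \<le> card (ccol l r i ` {0..<l})"
    by (intro card_mono) auto
  also have "\<dots> \<le> l"
    using card_image_le[of "{0..<l}" "ccol l r i"] by simp
  finally show ?thesis .
qed

definition admissible :: "nat \<Rightarrow> nat \<Rightarrow> nat \<Rightarrow> (nat \<Rightarrow> nat) \<Rightarrow> nat set \<Rightarrow> bool" where
  "admissible k l m r T \<longleftrightarrow>
     T \<subseteq> {0..<blk_off l r m} \<and> card T = k \<and> (\<forall>i<m. card (T \<inter> blk l r i) \<le> l)"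

lemma admissible_extension:
  assumes "l \<le> k" "k \<le> m * l" "i < m" "U \<subseteq> blk l r i" "card U = l"
  obtains T where "admissible k l m r T" "U \<subseteq> T"
proof -
  let ?W = "ccols l r ({..<m} - {i})"
  have "k - l \<le> card ?W"
    using assms(2,3) by (simp add: card_ccols diff_mult_distrib)
  then obtain W where W: "W \<subseteq> ?W" "card W = k - l"
    by (rule obtain_subset_with_card_n)
  have W_blk: "W \<inter> blk l r i = {}"
  proof -
    have "x \<notin> blk l r i" if "x \<in> W" for x
    proof -
      from that W(1) obtain ip where ip: "ip \<in> ({..<m} - {i}) \<times> {0..<l}" "x = (\<lambda>(i, p). ccol l r i p) ip"
        unfolding ccols_def by blast
      obtain i' p where "ip = (i', p)"
        by (cases ip)
      with ip have "x = ccol l r i' p" "i' \<noteq> i" "p < l"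
        by auto
      then show ?thesis
        using ccol_in_blk_iff by blast
    qed
    then show ?thesis
      by blast
  qed
  have "finite U"
    using assms(4) by (rule finite_subset) (simp add: blk_def)
  have "finite W"
    using W(1) by (rule finite_subset) (simp add: ccols_def)
  have "admissible k l m r (U \<union> W)"
    unfolding admissible_def
  proof (intro conjI allI impI)
    show "U \<union> W \<subseteq> {0..<blk_off l r m}"
      using assms(3,4) W(1) blk_subset[of i m l r] ccols_subset[of "{..<m} - {i}" m l r] by blast
    show "card (U \<union> W) = k"
      using card_Un_disjoint[OF \<open>finite U\<close> \<open>finite W\<close>] W_blk assms(1,4,5) W(2) by auto
    fix i' assume "i' < m"
    show "card ((U \<union> W) \<inter> blk l r i') \<le> l"
    proof (cases "i' = i")
      case True
      then have "(U \<union> W) \<inter> blk l r i' = U"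
        using assms(4) W_blk by blast
      then show ?thesis
        using assms(5) by simp
    next
      case False
      then have "(U \<union> W) \<inter> blk l r i' = W \<inter> blk l r i'"
        using assms(4) blk_disjoint[of i i' l r] by blast
      then show ?thesis
        using card_ccols_Int_blk_le[OF W(1)] by simp
    qed
  qed
  then show ?thesis
    using that by blast
qed

lemma information_set_if_onto_card_le:
  assumes "finite C" "finite U" "(\<lambda>x. restrict x U) ` C = U \<rightarrow>\<^sub>E (UNIV :: 'a::finite set)"
    and "card C \<le> card (UNIV :: 'a set) ^ card U"
  shows "information_set U C"
proof -
  have "card ((\<lambda>x. restrict x U) ` C) = card (UNIV :: 'a set) ^ card U"
    using assms(2,3) by (simp add: card_PiE)
  then have "card ((\<lambda>x. restrict x U) ` C) = card C"
    using card_image_le[OF assms(1), of "\<lambda>x. restrict x U"] assms(4) by linarith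
  then have "inj_on (\<lambda>x. restrict x U) C"
    by (rule eq_card_imp_inj_on[OF assms(1)])
  with assms(3) show ?thesis
    by (simp add: information_set_def bij_betw_def)
qed

text \<open>On block \<open>i\<close> every codeword is determined by its \<open>l\<close> coordinates in \<open>C\<^sub>i\<close>, since the
  columns of \<open>D\<^sub>i\<close> are combinations of those of \<open>C\<^sub>i\<close>.\<close>

lemma restrict_code_blk_finite_card_le:
  fixes k l m i :: nat and r :: "nat \<Rightarrow> nat"
    and \<alpha> :: "nat \<times> nat \<Rightarrow> 'a::{finite,field}" and \<beta> :: "nat \<times> nat \<times> nat \<Rightarrow> 'a"
  assumes "i < m"
  defines "X \<equiv> restrict_code (blk l r i) (row_space k (blk_off l r m) (genmat k l m r \<alpha> \<beta>))"
  shows "finite X" "card X \<le> card (UNIV :: 'a set) ^ l"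
proof -
  define extend where "extend y = (\<lambda>j. if j \<in> blk l r i then
      (if j - blk_off l r i < l then y (j - blk_off l r i)
       else \<Sum>t<l. \<beta> (t, i, j - blk_off l r i - l) * y t) else 0)" for y :: "nat \<Rightarrow> 'a"
  have X_sub: "X \<subseteq> extend ` ({0..<l} \<rightarrow>\<^sub>E UNIV)"
  proof
    fix x assume "x \<in> X"
    then obtain c where x: "x = (\<lambda>j. if j \<in> blk l r i
        then row_comb k (blk_off l r m) (genmat k l m r \<alpha> \<beta>) c j else 0)"
      unfolding X_def mem_restrict_code_row_space by blast
    define y where "y = (\<lambda>t\<in>{0..<l}. \<Sum>w<k. c w * Cmat k \<alpha> w (i * l + t))"
    have "x j = extend y j" for j
    proof (cases "j \<in> blk l r i")
      case True
      then obtain p where j: "j = blk_off l r i + p" "p < l + r i"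
        by (rule blk_cases)
      have "j < blk_off l r m"
        using True blk_subset[OF assms(1), of l r] by auto
      have "(\<Sum>w<k. c w * (\<Sum>t<l. \<beta> (t, i, p - l) * Cmat k \<alpha> w (i * l + t)))
          = (\<Sum>t<l. \<beta> (t, i, p - l) * (\<Sum>w<k. c w * Cmat k \<alpha> w (i * l + t)))"
        by (simp add: sum_distrib_left mult.left_commute sum.swap[of _ "{..<k}"])
      then show ?thesis
        using \<open>j < blk_off l r m\<close> True
        by (simp add: x extend_def y_def row_comb_def genmat_blk_off[where r = r, OF assms(1) j(2)] j)
    qed (simp add: x extend_def)
    moreover have "y \<in> {0..<l} \<rightarrow>\<^sub>E UNIV"
      by (simp add: y_def)
    ultimately show "x \<in> extend ` ({0..<l} \<rightarrow>\<^sub>E UNIV)"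
      by blast
  qed
  have fin: "finite (extend ` ({0..<l} \<rightarrow>\<^sub>E (UNIV :: 'a set)))"
    by (simp add: finite_PiE)
  then show "finite X"
    using X_sub by (rule finite_subset[rotated])
  have "card (extend ` ({0..<l} \<rightarrow>\<^sub>E (UNIV :: 'a set))) \<le> card (UNIV :: 'a set) ^ l"
    using card_image_le[of "{0..<l} \<rightarrow>\<^sub>E (UNIV :: 'a set)" extend] by (simp add: card_PiE finite_PiE)
  with card_mono[OF fin X_sub] show "card X \<le> card (UNIV :: 'a set) ^ l"
    by linarith
qed

lemma is_MDS_on_blk:
  fixes \<alpha> :: "nat \<times> nat \<Rightarrow> 'a::{finite,field}"
  assumes "1 \<le> l" "l \<le> k" "k \<le> m * l" "i < m"
    and indep: "\<And>T. admissible k l m r T \<Longrightarrow> independent_cols k (genmat k l m r \<alpha> \<beta>) T"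
  shows "is_MDS_on (blk l r i) l (restrict_code (blk l r i) (row_space k (blk_off l r m) (genmat k l m r \<alpha> \<beta>)))"
proof (rule is_MDS_on_if_information_sets[OF subspace_restrict_code_row_space])
  show "finite (blk l r i)" "1 \<le> l" "l \<le> card (blk l r i)"
    using assms(1) by (simp_all add: blk_def)
  fix U assume U: "U \<subseteq> blk l r i" "card U = l"
  then obtain T where T: "admissible k l m r T" "U \<subseteq> T"
    using admissible_extension[OF assms(2-4)] by blast
  then have "T \<subseteq> {0..<blk_off l r m}" "card T = k" "finite T"
    unfolding admissible_def using finite_subset by auto
  with T indep have "(\<lambda>x. restrict x U) ` restrict_code (blk l r i) (row_space k (blk_off l r m) (genmat k l m r \<alpha> \<beta>))
      = U \<rightarrow>\<^sub>E UNIV"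
    using U(1) by (intro restrict_row_space_onto) auto
  moreover have "finite U"
    using U(1) finite_subset by (auto simp: blk_def)
  ultimately show "information_set U (restrict_code (blk l r i) (row_space k (blk_off l r m) (genmat k l m r \<alpha> \<beta>)))"
    using restrict_code_blk_finite_card_le[OF assms(4)] U(2) by (intro information_set_if_onto_card_le) auto
qed

lemma is_MDS_on_punctured:
  fixes k l m :: nat and r :: "nat \<Rightarrow> nat" and E :: "nat \<Rightarrow> nat set"
    and \<alpha> :: "nat \<times> nat \<Rightarrow> 'a::{finite,field}" and \<beta> :: "nat \<times> nat \<times> nat \<Rightarrow> 'a"
  assumes "1 \<le> k" "k < m * l" and E: "\<forall>i<m. E i \<subseteq> blk l r i \<and> card (E i) = r i"
    and indep: "\<And>T. admissible k l m r T \<Longrightarrow> independent_cols k (genmat k l m r \<alpha> \<beta>) T"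
  defines "S \<equiv> {0..<blk_off l r m} - (\<Union>i<m. E i)"
  shows "is_MDS_on S k (restrict_code S (row_space k (blk_off l r m) (genmat k l m r \<alpha> \<beta>)))"
proof (rule is_MDS_on_if_information_sets[OF subspace_restrict_code_row_space])
  have E_sub: "(\<Union>i<m. E i) \<subseteq> {0..<blk_off l r m}"
    using E blk_subset[of _ m l r] by blast
  have "card (\<Union>i<m. E i) \<le> (\<Sum>i<m. card (E i))"
    by (rule card_UN_le) simp
  also have "\<dots> = (\<Sum>i<m. r i)"
    using E by simp
  finally have "card (\<Union>i<m. E i) \<le> (\<Sum>i<m. r i)" .
  moreover have "card S = blk_off l r m - card (\<Union>i<m. E i)"
    unfolding S_def using card_Diff_subset[OF finite_subset[OF E_sub finite_atLeastLessThan] E_sub] by simp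
  ultimately show "k \<le> card S"
    using assms(2) by (simp add: blk_off_eq)
  show "finite S" "1 \<le> k"
    using assms(1) by (simp_all add: S_def)
  fix U assume U: "U \<subseteq> S" "card U = k"
  have "finite U"
    using U(1) by (rule finite_subset) (simp add: S_def)
  have "card (U \<inter> blk l r i) \<le> l" if "i < m" for i
  proof -
    have "U \<inter> blk l r i \<subseteq> blk l r i - E i"
      using U(1) that by (auto simp: S_def)
    then have "card (U \<inter> blk l r i) \<le> card (blk l r i - E i)"
      by (intro card_mono) (simp_all add: blk_def)
    also have "\<dots> = l"
    proof -
      have Ei: "E i \<subseteq> blk l r i" "card (E i) = r i"
        using E that by auto
      moreover have "finite (E i)"
        using Ei(1) by (rule finite_subset) (simp add: blk_def)
      ultimately show ?thesis
        by (simp add: card_Diff_subset card_blk)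
    qed
    finally show ?thesis .
  qed
  with U have "admissible k l m r U"
    by (auto simp: admissible_def S_def)
  then show "information_set U (restrict_code S (row_space k (blk_off l r m) (genmat k l m r \<alpha> \<beta>)))"
    using \<open>finite U\<close> U by (intro information_set_if_independent_cols indep) (auto simp: S_def)
qed

lemma is_PMDS_if_admissible_independent:
  fixes \<alpha> :: "nat \<times> nat \<Rightarrow> 'a::{finite,field}"
  assumes "1 \<le> l" "l \<le> k" "k < m * l"
    and indep: "\<And>T. admissible k l m r T \<Longrightarrow> independent_cols k (genmat k l m r \<alpha> \<beta>) T"
  shows "is_PMDS k l m r (row_space k (\<Sum>i<m. l + r i) (genmat k l m r \<alpha> \<beta>))"
proof -
  have N: "(\<Sum>i<m. l + r i) = blk_off l r m"
    by (simp add: blk_off_def)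
  let ?C = "row_space k (blk_off l r m) (genmat k l m r \<alpha> \<beta>)"
  have "0 < m"
    using assms(3) by (cases m) auto
  have "{blk_off l r 0..<blk_off l r 0 + l} \<subseteq> blk l r 0" "card {blk_off l r 0..<blk_off l r 0 + l} = l"
    by (auto simp: blk_def)
  then obtain T where T: "admissible k l m r T"
    using admissible_extension[OF assms(2) less_imp_le[OF assms(3)] \<open>0 < m\<close>] by blast
  then have "T \<subseteq> {0..<blk_off l r m}" "card T = k" "finite T"
    unfolding admissible_def using finite_subset by auto
  then have "information_set T ?C"
    using information_set_if_independent_cols[OF indep[OF T]] restrict_code_row_space_full by metis
  then have "code_dim ?C = k"
    using code_dim_eq_card_information_set[OF _ \<open>finite T\<close>] \<open>card T = k\<close>
      subspace_restrict_code_row_space[of "{0..<blk_off l r m}"] restrict_code_row_space_full by metis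
  moreover have "k < blk_off l r m"
    using assms(3) by (simp add: blk_off_eq)
  ultimately show ?thesis
    unfolding is_PMDS_def Let_def N
    using is_MDS_on_blk[OF assms(1,2) less_imp_le[OF assms(3)] _ indep]
      is_MDS_on_punctured[OF _ assms(3) _ indep] assms(1,2) by auto
qed

section \<open>A specialisation with independent columns\<close>

lemma independent_cols_if_unit_cols:
  assumes "\<forall>w0<k. \<exists>j\<in>T. \<forall>w<k. G w j = (if w = w0 then 1 else 0)"
  shows "independent_cols k G T"
  unfolding independent_cols_def
proof (intro allI impI)
  fix c w0 assume c: "\<forall>j\<in>T. (\<Sum>w<k. c w * G w j) = 0" and "w0 < k"
  then obtain j where "j \<in> T" and j: "\<forall>w<k. G w j = (if w = w0 then 1 else 0)"
    using assms by blast
  have "(\<Sum>w<k. c w * G w j) = (\<Sum>w<k. if w = w0 then c w0 else 0)"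
    using j by (intro sum.cong) auto
  also have "\<dots> = c w0"
    using \<open>w0 < k\<close> by simp
  finally show "c w0 = 0"
    using c \<open>j \<in> T\<close> by simp
qed

lemma independent_cols_reindex:
  assumes "\<And>w j. j \<in> T \<Longrightarrow> G w j = H w (\<mu> j)" and "independent_cols k H (\<mu> ` T)"
  shows "independent_cols k G T"
  using assms unfolding independent_cols_def by simp

text \<open>Whatever \<open>k\<close> columns of \<open>[I\<^sub>k | A]\<close> are prescribed, \<open>A\<close> can be chosen so that they form a
  permutation matrix: the unit vectors missing from the identity part are placed, via a bijection,
  into the prescribed columns of \<open>A\<close>.\<close>

lemma exists_Cmat_independent_cols:
  assumes "finite T" "card T = k"
  shows "\<exists>\<alpha> :: nat \<times> nat \<Rightarrow> 'a::field. independent_cols k (Cmat k \<alpha>) T"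
proof -
  define J where "J = T - {0..<k}"
  define R where "R = {0..<k} - T"
  have "finite J" "finite R"
    using assms(1) by (simp_all add: J_def R_def)
  have "card J = card T - card (T \<inter> {0..<k})"
    unfolding J_def using assms(1) by (intro card_Diff_subset_Int) simp
  moreover have "card R = k - card ({0..<k} \<inter> T)"
    unfolding R_def by (subst card_Diff_subset_Int) simp_all
  ultimately have "card J = card R"
    using assms(2) by (simp add: Int_commute)
  then obtain \<sigma> where \<sigma>: "bij_betw \<sigma> J R"
    using finite_same_card_bij[OF \<open>finite J\<close> \<open>finite R\<close>] by blast
  define \<alpha> where "\<alpha> = (\<lambda>(w, z). if k + z \<in> J \<and> w = \<sigma> (k + z) then 1 else (0::'a))"
  have "\<exists>j\<in>T. \<forall>w<k. Cmat k \<alpha> w j = (if w = w0 then 1 else 0)" if "w0 < k" for w0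
  proof (cases "w0 \<in> T")
    case True
    have "\<forall>w<k. Cmat k \<alpha> w w0 = (if w = w0 then 1 else 0)"
      using that by (simp add: Cmat_def)
    with True show ?thesis ..
  next
    case False
    with that have "w0 \<in> \<sigma> ` J"
      using \<sigma> by (simp add: bij_betw_def R_def)
    then obtain j where "j \<in> J" "\<sigma> j = w0"
      by blast
    then have "j \<in> T" "\<not> j < k"
      by (simp_all add: J_def)
    then have "k + (j - k) = j"
      by simp
    then have "\<forall>w<k. Cmat k \<alpha> w j = (if w = w0 then 1 else 0)"
      using \<open>\<not> j < k\<close> \<open>j \<in> J\<close> \<open>\<sigma> j = w0\<close> by (simp add: Cmat_def \<alpha>_def)
    with \<open>j \<in> T\<close> show ?thesis ..
  qed
  then show ?thesis
    using independent_cols_if_unit_cols by blast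
qed

lemma card_blk_parts_le:
  assumes "admissible k l m r T" "i < m"
  shows "card {p. p < l \<and> blk_off l r i + p \<in> T} + card {j. j < r i \<and> blk_off l r i + l + j \<in> T} \<le> l"
proof -
  let ?P = "{p. p < l \<and> blk_off l r i + p \<in> T}" and ?Q = "{j. j < r i \<and> blk_off l r i + l + j \<in> T}"
  have "T \<inter> blk l r i = (\<lambda>p. blk_off l r i + p) ` ?P \<union> (\<lambda>j. blk_off l r i + l + j) ` ?Q"
  proof
    show "T \<inter> blk l r i \<subseteq> (\<lambda>p. blk_off l r i + p) ` ?P \<union> (\<lambda>j. blk_off l r i + l + j) ` ?Q"
    proof
      fix c assume c: "c \<in> T \<inter> blk l r i"
      then have "c \<in> blk l r i"
        by simp
      then obtain p where p: "c = blk_off l r i + p" "p < l + r i"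
        by (rule blk_cases)
      show "c \<in> (\<lambda>p. blk_off l r i + p) ` ?P \<union> (\<lambda>j. blk_off l r i + l + j) ` ?Q"
      proof (cases "p < l")
        case True
        with c p show ?thesis by auto
      next
        case False
        with c p have "p - l \<in> ?Q" "c = blk_off l r i + l + (p - l)"
          by auto
        then show ?thesis by blast
      qed
    qed
  qed (auto simp: blk_def)
  moreover have "(\<lambda>p. blk_off l r i + p) ` ?P \<inter> (\<lambda>j. blk_off l r i + l + j) ` ?Q = {}"
    by auto
  ultimately have "card (T \<inter> blk l r i) = card ?P + card ?Q"
    by (simp add: card_Un_disjoint card_image)
  moreover have "card (T \<inter> blk l r i) \<le> l"
    using assms unfolding admissible_def by blast
  ultimately show ?thesis
    by linarith
qed

lemma admissible_blk_matching:
  assumes "admissible k l m r T" "i < m"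
  shows "\<exists>\<tau>. \<tau> ` {j. j < r i \<and> blk_off l r i + l + j \<in> T} \<subseteq> {p. p < l \<and> blk_off l r i + p \<notin> T}
    \<and> inj_on \<tau> {j. j < r i \<and> blk_off l r i + l + j \<in> T}"
proof -
  let ?P = "{p. p < l \<and> blk_off l r i + p \<in> T}" and ?Q = "{j. j < r i \<and> blk_off l r i + l + j \<in> T}"
  have "{p. p < l \<and> blk_off l r i + p \<notin> T} = {0..<l} - ?P"
    by auto
  moreover have "card ({0..<l} - ?P) = l - card ?P"
    by (subst card_Diff_subset) auto
  ultimately have "card ?Q \<le> card {p. p < l \<and> blk_off l r i + p \<notin> T}"
    using card_blk_parts_le[OF assms] by simp
  then show ?thesis
    using card_le_inj[of ?Q "{p. p < l \<and> blk_off l r i + p \<notin> T}"] by simp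
qed

lemma inj_on_matched_cols:
  fixes l m :: nat and r :: "nat \<Rightarrow> nat" and \<tau> :: "nat \<Rightarrow> nat \<Rightarrow> nat" and slot :: "nat \<Rightarrow> nat"
  assumes T: "T \<subseteq> {0..<blk_off l r m}"
    and \<tau>_into: "\<And>i. i < m \<Longrightarrow>
      \<tau> i ` {j. j < r i \<and> blk_off l r i + l + j \<in> T} \<subseteq> {p. p < l \<and> blk_off l r i + p \<notin> T}"
    and \<tau>_inj: "\<And>i. i < m \<Longrightarrow> inj_on (\<tau> i) {j. j < r i \<and> blk_off l r i + l + j \<in> T}"
  defines "slot c \<equiv> if blk_pos l r m c < l then blk_pos l r m c
    else \<tau> (blk_idx l r m c) (blk_pos l r m c - l)"
  shows "\<And>c. c \<in> T \<Longrightarrow> slot c < l" and "inj_on (\<lambda>c. blk_idx l r m c * l + slot c) T"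
proof -
  let ?i = "blk_idx l r m" and ?p = "blk_pos l r m"
  have blk: "?i c < m" "?p c < l + r (?i c)" "blk_off l r (?i c) + ?p c = c" if "c \<in> T" for c
    using blk_idx_pos[of c l r m] T that by auto
  have D_part: "?p c - l < r (?i c) \<and> blk_off l r (?i c) + l + (?p c - l) \<in> T"
    if "c \<in> T" "\<not> ?p c < l" for c
  proof -
    have "blk_off l r (?i c) + l + (?p c - l) = c"
      using blk(3)[OF that(1)] that(2) by linarith
    moreover have "?p c - l < r (?i c)"
      using blk(2)[OF that(1)] that(2) by linarith
    ultimately show ?thesis
      using that(1) by simp
  qed
  have slot: "slot c < l \<and> (blk_off l r (?i c) + slot c \<in> T \<longleftrightarrow> ?p c < l)" if "c \<in> T" for c
  proof (cases "?p c < l")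
    case True
    then show ?thesis
      using blk(3)[OF that] that by (simp add: slot_def)
  next
    case False
    then have "\<tau> (?i c) (?p c - l) \<in> {p. p < l \<and> blk_off l r (?i c) + p \<notin> T}"
      using \<tau>_into[OF blk(1)[OF that]] D_part[OF that] by blast
    with False show ?thesis
      by (simp add: slot_def)
  qed
  then show "\<And>c. c \<in> T \<Longrightarrow> slot c < l"
    by blast
  show "inj_on (\<lambda>c. ?i c * l + slot c) T"
  proof (rule inj_onI)
    fix c c' assume c: "c \<in> T" "c' \<in> T" and "?i c * l + slot c = ?i c' * l + slot c'"
    then have "(?i c * l + slot c) div l = (?i c' * l + slot c') div l"
      "(?i c * l + slot c) mod l = (?i c' * l + slot c') mod l"
      by simp_all
    then have same_idx: "?i c = ?i c'" and same_slot: "slot c = slot c'"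
      using slot[OF c(1)] slot[OF c(2)] by simp_all
    then have same_side: "?p c < l \<longleftrightarrow> ?p c' < l"
      using slot[OF c(1)] slot[OF c(2)] by simp
    have "?p c = ?p c'"
    proof (cases "?p c < l")
      case True
      with same_side same_slot show ?thesis
        by (simp add: slot_def)
    next
      case False
      with same_side same_slot same_idx have "\<tau> (?i c) (?p c - l) = \<tau> (?i c) (?p c' - l)"
        by (simp add: slot_def)
      with \<tau>_inj[OF blk(1)[OF c(1)]] D_part[OF c(1) False] D_part[of c'] c(2) False same_side same_idx
      have "?p c - l = ?p c' - l"
        by (auto dest: inj_onD)
      with False same_side show ?thesis
        by simp
    qed
    then show "c = c'"
      using blk(3)[OF c(1)] blk(3)[OF c(2)] same_idx by metis
  qed
qed

text \<open>Each \<open>D\<^sub>i\<close>-column of \<open>T\<close> is matched with a \<open>C\<^sub>i\<close>-column outside \<open>T\<close>; choosing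
  \<open>\<beta>\<close> so that it copies its partner turns the columns of \<open>T\<close> into distinct columns of
  \<open>[I\<^sub>k | A]\<close>.\<close>

lemma exists_genmat_eq_Cmat:
  assumes adm: "admissible k l m r T"
  shows "\<exists>(\<beta> :: nat \<times> nat \<times> nat \<Rightarrow> 'a::field) \<mu>. inj_on \<mu> T \<and>
    (\<forall>\<alpha> w c. c \<in> T \<longrightarrow> genmat k l m r \<alpha> \<beta> w c = Cmat k \<alpha> w (\<mu> c))"
proof -
  let ?i = "blk_idx l r m" and ?p = "blk_pos l r m"
  have T: "T \<subseteq> {0..<blk_off l r m}"
    using adm by (simp add: admissible_def)
  have "\<forall>i\<in>{..<m}. \<exists>\<tau>. \<tau> ` {j. j < r i \<and> blk_off l r i + l + j \<in> T} \<subseteq> {p. p < l \<and> blk_off l r i + p \<notin> T}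
      \<and> inj_on \<tau> {j. j < r i \<and> blk_off l r i + l + j \<in> T}"
    using admissible_blk_matching[OF adm] by simp
  from bchoice[OF this] obtain \<tau> where
    "\<forall>i\<in>{..<m}. \<tau> i ` {j. j < r i \<and> blk_off l r i + l + j \<in> T} \<subseteq> {p. p < l \<and> blk_off l r i + p \<notin> T}
      \<and> inj_on (\<tau> i) {j. j < r i \<and> blk_off l r i + l + j \<in> T}"
    by blast
  then have \<tau>: "\<And>i. i < m \<Longrightarrow>
      \<tau> i ` {j. j < r i \<and> blk_off l r i + l + j \<in> T} \<subseteq> {p. p < l \<and> blk_off l r i + p \<notin> T}"
    "\<And>i. i < m \<Longrightarrow> inj_on (\<tau> i) {j. j < r i \<and> blk_off l r i + l + j \<in> T}"
    by simp_all
  define slot where "slot c = (if ?p c < l then ?p c else \<tau> (?i c) (?p c - l))" for c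
  define \<beta> where "\<beta> = (\<lambda>(t, i, j). if i < m \<and> j < r i \<and> blk_off l r i + l + j \<in> T \<and> t = \<tau> i j
      then 1 else (0::'a))"
  have slot_lt: "slot c < l" if "c \<in> T" for c
    unfolding slot_def using inj_on_matched_cols(1)[OF T \<tau> that] .
  have eq: "genmat k l m r \<alpha> \<beta> w c = Cmat k \<alpha> w (?i c * l + slot c)" if "c \<in> T" for \<alpha> w c
  proof -
    have blk: "?i c < m" "?p c < l + r (?i c)" "blk_off l r (?i c) + ?p c = c"
      using blk_idx_pos[of c l r m] T that by auto
    note entry = genmat_blk_off[where r = r, OF blk(1,2), of k \<alpha> \<beta> w, unfolded blk(3)]
    show ?thesis
    proof (cases "?p c < l")
      case True
      then show ?thesis
        using entry by (simp add: slot_def)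
    next
      case False
      have "blk_off l r (?i c) + l + (?p c - l) = c" "?p c - l < r (?i c)"
        using blk(2,3) False by linarith+
      then have "(\<Sum>t<l. \<beta> (t, ?i c, ?p c - l) * Cmat k \<alpha> w (?i c * l + t))
          = (\<Sum>t<l. if t = slot c then Cmat k \<alpha> w (?i c * l + t) else 0)"
        using False blk(1) that by (intro sum.cong) (auto simp: \<beta>_def slot_def)
      also have "\<dots> = Cmat k \<alpha> w (?i c * l + slot c)"
        using slot_lt[OF that] by simp
      finally show ?thesis
        using entry False by simp
    qed
  qed
  have inj: "inj_on (\<lambda>c. ?i c * l + slot c) T"
    unfolding slot_def using inj_on_matched_cols(2)[OF T \<tau>] .
  show ?thesis
    by (intro exI[of _ \<beta>] exI[of _ "\<lambda>c. ?i c * l + slot c"] conjI allI impI inj eq)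
qed

lemma exists_independent_cols_genmat:
  assumes "admissible k l m r T"
  shows "\<exists>(\<alpha> :: nat \<times> nat \<Rightarrow> 'a::field) \<beta>. independent_cols k (genmat k l m r \<alpha> \<beta>) T"
proof -
  obtain \<beta> :: "nat \<times> nat \<times> nat \<Rightarrow> 'a" and \<mu>
    where \<mu>: "inj_on \<mu> T" "\<forall>\<alpha> w c. c \<in> T \<longrightarrow> genmat k l m r \<alpha> \<beta> w c = Cmat k \<alpha> w (\<mu> c)"
    using exists_genmat_eq_Cmat[OF assms] by blast
  have "finite T" "card T = k"
    using assms finite_subset by (auto simp: admissible_def)
  then obtain \<alpha> :: "nat \<times> nat \<Rightarrow> 'a" where "independent_cols k (Cmat k \<alpha>) (\<mu> ` T)"
    using exists_Cmat_independent_cols[of "\<mu> ` T" k] card_image[OF \<mu>(1)] by auto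
  then show ?thesis
    using independent_cols_reindex[of T "genmat k l m r \<alpha> \<beta>" "Cmat k \<alpha>" \<mu>] \<mu>(2) by auto
qed

section \<open>The determinant as a polynomial\<close>

lemma det_ne_zero_iff_independent_cols:
  fixes G :: "nat \<Rightarrow> nat \<Rightarrow> 'a::field"
  assumes e: "bij_betw e {0..<k} T"
  shows "det (mat k k (\<lambda>(j, w). G w (e j))) \<noteq> 0 \<longleftrightarrow> independent_cols k G T"
proof -
  let ?A = "mat k k (\<lambda>(j, w). G w (e j))"
  have mult: "(?A *\<^sub>v vec k c) $ j = (\<Sum>w<k. c w * G w (e j))" if "j < k" for c j
    using that by (simp add: scalar_prod_def row_def mult.commute lessThan_atLeast0)
  have "(\<exists>v. v \<in> carrier_vec k \<and> v \<noteq> 0\<^sub>v k \<and> ?A *\<^sub>v v = 0\<^sub>v k)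
      \<longleftrightarrow> (\<exists>c. (\<forall>j\<in>T. (\<Sum>w<k. c w * G w j) = 0) \<and> (\<exists>w<k. c w \<noteq> 0))"
  proof
    assume "\<exists>v. v \<in> carrier_vec k \<and> v \<noteq> 0\<^sub>v k \<and> ?A *\<^sub>v v = 0\<^sub>v k"
    then obtain v where v: "v \<in> carrier_vec k" "v \<noteq> 0\<^sub>v k" "?A *\<^sub>v v = 0\<^sub>v k"
      by blast
    then have "vec k (($) v) = v"
      by auto
    then have "(\<Sum>w<k. v $ w * G w (e j)) = 0" if "j < k" for j
      using mult[OF that, of "($) v"] v(3) that by simp
    then have "\<forall>j\<in>T. (\<Sum>w<k. v $ w * G w j) = 0"
      using e unfolding bij_betw_def by auto
    moreover have "\<exists>w<k. v $ w \<noteq> 0"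
      using v(1,2) by (auto intro: eq_vecI)
    ultimately show "\<exists>c. (\<forall>j\<in>T. (\<Sum>w<k. c w * G w j) = 0) \<and> (\<exists>w<k. c w \<noteq> 0)"
      by (intro exI[of _ "\<lambda>w. v $ w"]) simp
  next
    assume "\<exists>c. (\<forall>j\<in>T. (\<Sum>w<k. c w * G w j) = 0) \<and> (\<exists>w<k. c w \<noteq> 0)"
    then obtain c where c: "\<forall>j\<in>T. (\<Sum>w<k. c w * G w j) = 0" "\<exists>w<k. c w \<noteq> 0"
      by blast
    have "(?A *\<^sub>v vec k c) $ j = 0" if "j < k" for j
    proof -
      have "e j \<in> T"
        using e that by (auto simp: bij_betw_def)
      then show ?thesis
        using mult[OF that, of c] c(1) by simp
    qed
    then have "?A *\<^sub>v vec k c = 0\<^sub>v k"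
      by (intro eq_vecI) simp_all
    moreover have "vec k c \<noteq> 0\<^sub>v k"
      using c(2) by (auto simp: vec_eq_iff)
    ultimately show "\<exists>v. v \<in> carrier_vec k \<and> v \<noteq> 0\<^sub>v k \<and> ?A *\<^sub>v v = 0\<^sub>v k"
      by (intro exI[of _ "vec k c"]) simp
  qed
  then show ?thesis
    unfolding det_0_iff_vec_prod_zero_field[OF mat_carrier] independent_cols_def by blast
qed

definition vars :: "nat \<Rightarrow> nat \<Rightarrow> nat \<Rightarrow> nat \<Rightarrow> (nat \<Rightarrow> nat) \<Rightarrow> (nat \<times> nat + nat \<times> nat \<times> nat) set" where
  "vars k s l m r = Inl ` ({0..<k} \<times> {0..<s}) \<union> Inr ` {(t, i, j). t < l \<and> i < m \<and> j < r i}"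

definition unit_cols :: "nat \<Rightarrow> nat \<Rightarrow> nat \<Rightarrow> (nat \<Rightarrow> nat) \<Rightarrow> nat set" where
  "unit_cols k l m r = (\<lambda>(i, p). ccol l r i p) ` {(i, p). i < m \<and> p < l \<and> i * l + p < k}"

lemma mult_add_less_mult: "i < m \<Longrightarrow> t < l \<Longrightarrow> i * l + t < m * (l :: nat)"
proof -
  assume "i < m" "t < l"
  then have "i * l + t < Suc i * l"
    by simp
  also have "\<dots> \<le> m * l"
    using \<open>i < m\<close> by (intro mult_right_mono) simp_all
  finally show ?thesis .
qed

lemma polyfun_Cmat:
  assumes "set vs = vars k s l m r" "k + s = m * l" "c < m * l" "w < k"
  shows "polyfun vs (if c < k then 0 else 1) (\<lambda>x :: _ \<Rightarrow> 'a::field. Cmat k (x \<circ> Inl) w c)"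
proof (cases "c < k")
  case True
  then show ?thesis
    by (simp add: Cmat_def polyfun_const del: polyfun.simps)
next
  case False
  moreover have "Inl (w, c - k) \<in> set vs"
    using assms False by (auto simp: vars_def)
  ultimately show ?thesis
    using polyfun_var[of "Inl (w, c - k)" vs] by (simp add: Cmat_def del: polyfun.simps)
qed

lemma blk_off_add_mem_unit_cols_iff:
  assumes "i < m" "p < l + r i"
  shows "blk_off l r i + p \<in> unit_cols k l m r \<longleftrightarrow> p < l \<and> i * l + p < k"
proof
  assume "p < l \<and> i * l + p < k"
  with assms(1) show "blk_off l r i + p \<in> unit_cols k l m r"
    unfolding unit_cols_def ccol_def by (intro image_eqI[of _ _ "(i, p)"]) auto
next
  assume "blk_off l r i + p \<in> unit_cols k l m r"
  then obtain i' p' where ip': "p' < l" "i' * l + p' < k" "blk_off l r i + p = ccol l r i' p'"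
    unfolding unit_cols_def by auto
  have "blk_off l r i + p \<in> blk l r i"
    using assms(2) by (simp add: blk_def)
  with ip' have "i' = i"
    using ccol_in_blk_iff[of p' l r i' i] by simp
  with ip' show "p < l \<and> i * l + p < k"
    by (simp add: ccol_def)
qed

lemma polyfun_genmat:
  assumes vs: "set vs = vars k s l m r" and "k + s = m * l" "c < blk_off l r m" "w < k"
  shows "polyfun vs (if c \<in> unit_cols k l m r then 0 else 2)
     (\<lambda>x :: _ \<Rightarrow> 'a::field. genmat k l m r (x \<circ> Inl) (x \<circ> Inr) w c)"
proof -
  obtain i where i: "i < m" "c \<in> blk l r i"
    using ex_blk[OF assms(3)] by blast
  then obtain p where c: "c = blk_off l r i + p" and p: "p < l + r i"
    by (elim blk_cases)
  have Cmat_deg1: "polyfun vs 1 (\<lambda>x :: _ \<Rightarrow> 'a. Cmat k (x \<circ> Inl) w (i * l + t))" if "t < l" for t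
    using polyfun_Cmat[OF vs assms(2) mult_add_less_mult[OF i(1) that] assms(4)]
    by (cases "i * l + t < k") (auto elim: polyfun_mono simp del: polyfun.simps)
  show ?thesis
  proof (cases "p < l")
    case True
    then show ?thesis
      using polyfun_Cmat[OF vs assms(2) mult_add_less_mult[OF i(1) True] assms(4)]
        polyfun_mono[OF Cmat_deg1[OF True], of 2]
      unfolding c genmat_blk_off[where r = r, OF i(1) p] blk_off_add_mem_unit_cols_iff[where r = r, OF i(1) p]
      by (cases "i * l + p < k") (simp_all del: polyfun.simps)
  next
    case False
    have "polyfun vs 2 (\<lambda>x :: _ \<Rightarrow> 'a. x (Inr (t, i, p - l)) * Cmat k (x \<circ> Inl) w (i * l + t))"
      if "t < l" for t
    proof -
      have "Inr (t, i, p - l) \<in> set vs"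
        using vs that i(1) p False by (auto simp: vars_def)
      from polyfun_mult[OF polyfun_var[OF this] Cmat_deg1[OF that]] show ?thesis
        unfolding one_add_one .
    qed
    then have "polyfun vs 2 (\<lambda>x :: _ \<Rightarrow> 'a. \<Sum>t<l. x (Inr (t, i, p - l)) * Cmat k (x \<circ> Inl) w (i * l + t))"
      by (intro polyfun_sum) auto
    then show ?thesis
      using False unfolding c genmat_blk_off[where r = r, OF i(1) p] blk_off_add_mem_unit_cols_iff[where r = r, OF i(1) p]
      by simp
  qed
qed

lemma polyfun_det:
  assumes vs: "set vs = vars k s l m r" and "k + s = m * l"
    and "T \<subseteq> {0..<blk_off l r m}" and e: "bij_betw e {0..<k} T"
  shows "polyfun vs (2 * card (T - unit_cols k l m r))
    (\<lambda>x :: _ \<Rightarrow> 'a::field. det (mat k k (\<lambda>(j, w). genmat k l m r (x \<circ> Inl) (x \<circ> Inr) w (e j))))"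
proof -
  let ?G = "\<lambda>(x :: _ \<Rightarrow> 'a) w c. genmat k l m r (x \<circ> Inl) (x \<circ> Inr) w c"
  let ?deg = "\<lambda>c. if c \<in> unit_cols k l m r then 0 else 2 :: nat"
  have "(\<Sum>j\<in>{0..<k}. ?deg (e j)) = (\<Sum>c\<in>T. ?deg c)"
    using sum.reindex_bij_betw[OF e] .
  also have "\<dots> = 2 * card (T - unit_cols k l m r)"
    using bij_betw_finite[OF e] by (simp add: sum.If_cases Diff_eq)
  finally have deg: "(\<Sum>j\<in>{0..<k}. ?deg (e j)) = 2 * card (T - unit_cols k l m r)" .
  have "polyfun vs (2 * card (T - unit_cols k l m r)) (\<lambda>x. of_int (sign p) * (\<Prod>j\<in>{0..<k}. ?G x (p j) (e j)))"
    if "p permutes {0..<k}" for p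
  proof -
    have "polyfun vs (?deg (e j)) (\<lambda>x. ?G x (p j) (e j))" if "j \<in> {0..<k}" for j
    proof -
      have "e j \<in> T" "p j < k"
        using that e permutes_in_image[OF \<open>p permutes {0..<k}\<close>, of j]
        by (auto simp: bij_betw_def)
      then have "e j < blk_off l r m" "p j < k"
        using assms(3) by auto
      then show ?thesis
        by (rule polyfun_genmat[OF vs assms(2)])
    qed
    then have "polyfun vs (\<Sum>j\<in>{0..<k}. ?deg (e j)) (\<lambda>x. \<Prod>j\<in>{0..<k}. ?G x (p j) (e j))"
      by (intro polyfun_prod) simp_all
    from polyfun_mult[OF polyfun_const[of vs 0 "of_int (sign p)"] this] show ?thesis
      unfolding deg by simp
  qed
  then have "polyfun vs (2 * card (T - unit_cols k l m r))
      (\<lambda>x. \<Sum>p\<in>{p. p permutes {0..<k}}. of_int (sign p) * (\<Prod>j\<in>{0..<k}. ?G x (p j) (e j)))"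
    by (intro polyfun_sum) (simp_all add: finite_permutations)
  moreover have "det (mat k k (\<lambda>(j, w). ?G x w (e j)))
      = (\<Sum>p\<in>{p. p permutes {0..<k}}. of_int (sign p) * (\<Prod>j\<in>{0..<k}. ?G x (p j) (e j)))" for x
    unfolding det_def'[OF mat_carrier]
    by (intro sum.cong refl arg_cong2[where f = "(*)"] prod.cong) (auto dest: permutes_in_image)
  ultimately show ?thesis
    by simp
qed

section \<open>Counting\<close>

lemma card_PiE_prod_filter_eq:
  "card {(a, b) \<in> (A \<rightarrow>\<^sub>E (UNIV :: 'c set)) \<times> (B \<rightarrow>\<^sub>E UNIV). P a b} =
   card {x \<in> Inl ` A \<union> Inr ` B \<rightarrow>\<^sub>E UNIV. P (x \<circ> Inl) (x \<circ> Inr)}"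
proof (rule bij_betw_same_card[of "\<lambda>(a, b). case_sum a b"], rule bij_betw_byWitness[where f' = "\<lambda>x. (x \<circ> Inl, x \<circ> Inr)"])
  show "\<forall>ab\<in>{(a, b) \<in> (A \<rightarrow>\<^sub>E (UNIV :: 'c set)) \<times> (B \<rightarrow>\<^sub>E UNIV). P a b}.
      (\<lambda>x. (x \<circ> Inl, x \<circ> Inr)) ((\<lambda>(a, b). case_sum a b) ab) = ab"
    by (auto simp: case_sum_o_inj)
  show "\<forall>x\<in>{x \<in> Inl ` A \<union> Inr ` B \<rightarrow>\<^sub>E (UNIV :: 'c set). P (x \<circ> Inl) (x \<circ> Inr)}.
      (\<lambda>(a, b). case_sum a b) ((\<lambda>x. (x \<circ> Inl, x \<circ> Inr)) x) = x"
    by (auto simp: fun_eq_iff split: sum.split)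
  show "(\<lambda>(a, b). case_sum a b) ` {(a, b) \<in> (A \<rightarrow>\<^sub>E (UNIV :: 'c set)) \<times> (B \<rightarrow>\<^sub>E UNIV). P a b}
      \<subseteq> {x \<in> Inl ` A \<union> Inr ` B \<rightarrow>\<^sub>E UNIV. P (x \<circ> Inl) (x \<circ> Inr)}"
    by (auto simp: case_sum_o_inj PiE_def extensional_def split: sum.split) (meson imageI)+
  show "(\<lambda>x. (x \<circ> Inl, x \<circ> Inr)) ` {x \<in> Inl ` A \<union> Inr ` B \<rightarrow>\<^sub>E (UNIV :: 'c set). P (x \<circ> Inl) (x \<circ> Inr)}
      \<subseteq> {(a, b) \<in> (A \<rightarrow>\<^sub>E UNIV) \<times> (B \<rightarrow>\<^sub>E UNIV). P a b}"
    by (auto simp: PiE_def extensional_def)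
qed

lemma finite_index_set: "finite {(t, i, j). t < l \<and> i < m \<and> j < (r i :: nat)}" for l m :: nat
proof -
  have "{(t, i, j). t < l \<and> i < m \<and> j < r i} = {..<l} \<times> (SIGMA i:{..<m}. {..<r i})"
    by auto
  then show ?thesis
    by simp
qed

text \<open>Schwartz--Zippel applied to the determinant of the \<open>k \<times> k\<close> submatrix on \<open>T\<close>, a polynomial
  in \<open>(\<alpha>, \<beta>)\<close> that does not vanish identically by the specialisation constructed above.\<close>

lemma card_not_independent_cols_le:
  fixes k l m s :: nat and r :: "nat \<Rightarrow> nat"
  assumes "k + s = m * l" and adm: "admissible k l m r T"
  defines "\<Omega> \<equiv> ({0..<k} \<times> {0..<s} \<rightarrow>\<^sub>E (UNIV :: 'a::{finite,field} set)) \<times>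
      ({(t, i, j). t < l \<and> i < m \<and> j < r i} \<rightarrow>\<^sub>E (UNIV :: 'a set))"
  shows "card {(\<alpha>, \<beta>) \<in> \<Omega>. \<not> independent_cols k (genmat k l m r \<alpha> \<beta>) T} * card (UNIV :: 'a set)
      \<le> 2 * card (T - unit_cols k l m r) * card \<Omega>"
proof -
  have "finite (vars k s l m r)"
    using finite_index_set[of l m r] by (simp add: vars_def)
  then obtain vs where vs: "set vs = vars k s l m r" "distinct vs"
    using finite_distinct_list by blast
  have "T \<subseteq> {0..<blk_off l r m}" "card T = k"
    using adm by (auto simp: admissible_def)
  then obtain e where e: "bij_betw e {0..<k} T"
    using ex_bij_betw_nat_finite[of T] finite_subset by fastforce
  define f where "f x = det (mat k k (\<lambda>(j, w). genmat k l m r (x \<circ> Inl) (x \<circ> Inr) w (e j)))"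
    for x :: "_ \<Rightarrow> 'a"
  have f_eq_0: "f x = 0 \<longleftrightarrow> \<not> independent_cols k (genmat k l m r (x \<circ> Inl) (x \<circ> Inr)) T" for x
    unfolding f_def using det_ne_zero_iff_independent_cols[OF e] by blast
  obtain \<alpha>0 :: "nat \<times> nat \<Rightarrow> 'a" and \<beta>0 where "independent_cols k (genmat k l m r \<alpha>0 \<beta>0) T"
    using exists_independent_cols_genmat[OF adm] by blast
  then have "f (case_sum \<alpha>0 \<beta>0) \<noteq> 0"
    by (simp add: f_eq_0 case_sum_o_inj)
  moreover have "polyfun vs (2 * card (T - unit_cols k l m r)) f"
    unfolding f_def[abs_def] by (rule polyfun_det[OF vs(1) assms(1) \<open>T \<subseteq> _\<close> e])
  ultimately have SZ: "card {x \<in> set vs \<rightarrow>\<^sub>E UNIV. f x = 0} * card (UNIV :: 'a set)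
      \<le> 2 * card (T - unit_cols k l m r) * card (UNIV :: 'a set) ^ length vs"
    using schwartz_zippel[OF vs(2)] by blast
  have "card {(\<alpha>, \<beta>) \<in> \<Omega>. \<not> independent_cols k (genmat k l m r \<alpha> \<beta>) T}
      = card {x \<in> set vs \<rightarrow>\<^sub>E UNIV. f x = 0}"
    unfolding \<Omega>_def card_PiE_prod_filter_eq f_eq_0 vs(1) vars_def ..
  moreover have "card \<Omega> = card {(\<alpha>, \<beta>) \<in> \<Omega>. True}"
    by simp
  then have "card \<Omega> = card (UNIV :: 'a set) ^ length vs"
    unfolding \<Omega>_def card_PiE_prod_filter_eq
    using \<open>finite (vars k s l m r)\<close> distinct_card[OF vs(2)] by (simp add: vs(1) vars_def card_PiE)
  ultimately show ?thesis
    using SZ by simp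
qed

lemma bij_betw_mult_add:
  fixes k l m :: nat
  assumes "k \<le> m * l"
  shows "bij_betw (\<lambda>(i, p). i * l + p) {(i, p). i < m \<and> p < l \<and> i * l + p < k} {0..<k}"
proof (rule bij_betw_imageI)
  show "inj_on (\<lambda>(i, p). i * l + p) {(i, p). i < m \<and> p < l \<and> i * l + p < k}"
  proof (rule inj_onI, clarify)
    fix i p i' p' assume "p < l" "p' < l" "i * l + p = i' * l + p'"
    then have "(i * l + p) div l = (i' * l + p') div l" "(i * l + p) mod l = (i' * l + p') mod l"
      by simp_all
    with \<open>p < l\<close> \<open>p' < l\<close> show "i = i' \<and> p = p'"
      by simp
  qed
  have "c \<in> (\<lambda>(i, p). i * l + p) ` {(i, p). i < m \<and> p < l \<and> i * l + p < k}" if "c < k" for c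
  proof -
    have "c div l < m"
    proof (rule ccontr)
      assume "\<not> c div l < m"
      then have "m * l \<le> c div l * l"
        by simp
      also have "\<dots> \<le> c"
        by (simp add: div_times_less_eq_dividend)
      finally show False
        using that assms by simp
    qed
    moreover have "c mod l < l"
      using that assms by (cases "l = 0") simp_all
    ultimately show ?thesis
      using that by (intro image_eqI[of _ _ "(c div l, c mod l)"]) simp_all
  qed
  then show "(\<lambda>(i, p). i * l + p) ` {(i, p). i < m \<and> p < l \<and> i * l + p < k} = {0..<k}"
    by auto
qed

lemma unit_cols_subset_card:
  assumes "k \<le> m * l"
  shows "unit_cols k l m r \<subseteq> {0..<blk_off l r m}" "card (unit_cols k l m r) = k"
proof -
  let ?S = "{(i, p). i < m \<and> p < l \<and> i * l + p < k}"
  have S: "?S \<subseteq> {..<m} \<times> {0..<l}"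
    by auto
  then show "unit_cols k l m r \<subseteq> {0..<blk_off l r m}"
    unfolding unit_cols_def using ccols_subset[of "{..<m}" m l r] by (auto simp: ccols_def)
  have "card (unit_cols k l m r) = card ?S"
    unfolding unit_cols_def by (intro card_image inj_on_subset[OF inj_on_ccol S])
  also have "\<dots> = k"
    using bij_betw_mult_add[OF assms] by (simp add: bij_betw_same_card)
  finally show "card (unit_cols k l m r) = k" .
qed

lemma card_subsets_containing:
  assumes "finite A" "c \<in> A" "1 \<le> k"
  shows "card {T. T \<subseteq> A \<and> card T = k \<and> c \<in> T} = (card A - 1) choose (k - 1)"
proof -
  have "bij_betw (\<lambda>T. T - {c}) {T. T \<subseteq> A \<and> card T = k \<and> c \<in> T} {T. T \<subseteq> A - {c} \<and> card T = k - 1}"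
  proof (rule bij_betw_byWitness[where f' = "insert c"])
    show "\<forall>T\<in>{T. T \<subseteq> A \<and> card T = k \<and> c \<in> T}. insert c (T - {c}) = T"
      by auto
    show "\<forall>T\<in>{T. T \<subseteq> A - {c} \<and> card T = k - 1}. insert c T - {c} = T"
      by auto
    show "(\<lambda>T. T - {c}) ` {T. T \<subseteq> A \<and> card T = k \<and> c \<in> T} \<subseteq> {T. T \<subseteq> A - {c} \<and> card T = k - 1}"
      using assms(1) by (auto simp: finite_subset)
    show "insert c ` {T. T \<subseteq> A - {c} \<and> card T = k - 1} \<subseteq> {T. T \<subseteq> A \<and> card T = k \<and> c \<in> T}"
    proof (rule image_subsetI)
      fix T assume T: "T \<in> {T. T \<subseteq> A - {c} \<and> card T = k - 1}"
      then have "finite T" "c \<notin> T"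
        using assms(1) finite_subset by auto
      then show "insert c T \<in> {T. T \<subseteq> A \<and> card T = k \<and> c \<in> T}"
        using T assms(2,3) by auto
    qed
  qed
  then have "card {T. T \<subseteq> A \<and> card T = k \<and> c \<in> T} = card (A - {c}) choose (k - 1)"
    using assms(1) by (simp add: bij_betw_same_card n_subsets)
  then show ?thesis
    using assms(1,2) by simp
qed

text \<open>Double counting: each of the \<open>card A - k\<close> elements outside \<open>I\<close> lies in
  \<open>(card A - 1) choose (k - 1)\<close> of the \<open>k\<close>-subsets.\<close>

lemma sum_card_Diff_subsets:
  assumes "finite A" "I \<subseteq> A" "card I = k" "1 \<le> k"
  shows "(\<Sum>T | T \<subseteq> A \<and> card T = k. card (T - I)) = (card A - k) * ((card A - 1) choose (k - 1))"
proof -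
  let ?K = "{T. T \<subseteq> A \<and> card T = k}"
  have "finite ?K"
    using assms(1) by simp
  have "(\<Sum>T\<in>?K. card (T - I)) = (\<Sum>T\<in>?K. \<Sum>c\<in>A - I. of_bool (c \<in> T))"
  proof (rule sum.cong[OF refl])
    fix T assume "T \<in> ?K"
    then have "(A - I) \<inter> {c. c \<in> T} = T - I"
      by auto
    then show "card (T - I) = (\<Sum>c\<in>A - I. of_bool (c \<in> T))"
      using assms(1) by simp
  qed
  also have "\<dots> = (\<Sum>c\<in>A - I. \<Sum>T\<in>?K. of_bool (c \<in> T))"
    by (rule sum.swap)
  also have "\<dots> = (\<Sum>c\<in>A - I. (card A - 1) choose (k - 1))"
  proof (rule sum.cong[OF refl])
    fix c assume "c \<in> A - I"
    have "?K \<inter> {T. c \<in> T} = {T. T \<subseteq> A \<and> card T = k \<and> c \<in> T}"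
      by blast
    then show "(\<Sum>T\<in>?K. of_bool (c \<in> T)) = (card A - 1) choose (k - 1)"
      using \<open>finite ?K\<close> card_subsets_containing[OF assms(1) _ assms(4), of c] \<open>c \<in> A - I\<close> by simp
  qed
  also have "\<dots> = (card A - k) * ((card A - 1) choose (k - 1))"
    using assms(1-3) by (simp add: card_Diff_subset finite_subset)
  finally show ?thesis .
qed

lemma card_not_PMDS_le:
  fixes k l m s n :: nat and r :: "nat \<Rightarrow> nat"
  assumes "1 \<le> l" "l \<le> k" "k + s = m * l" "1 \<le> s" and n: "n = (\<Sum>i<m. l + r i)"
  defines "\<Omega> \<equiv> ({0..<k} \<times> {0..<s} \<rightarrow>\<^sub>E (UNIV :: 'a::{finite,field} set)) \<times>
      ({(t, i, j). t < l \<and> i < m \<and> j < r i} \<rightarrow>\<^sub>E (UNIV :: 'a set))"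
  shows "card {(\<alpha>, \<beta>) \<in> \<Omega>. \<not> is_PMDS k l m r (row_space k n (genmat k l m r \<alpha> \<beta>))}
      * card (UNIV :: 'a set) \<le> 2 * (n - k) * ((n - 1) choose (k - 1)) * card \<Omega>"
proof -
  have "k < m * l" "1 \<le> k" "n = blk_off l r m"
    using assms(1-5) by (simp_all add: blk_off_def)
  define bad where "bad T = {(\<alpha>, \<beta>) \<in> \<Omega>. \<not> independent_cols k (genmat k l m r \<alpha> \<beta>) T}" for T
  let ?Adm = "{T. admissible k l m r T}" and ?K = "{T. T \<subseteq> {0..<n} \<and> card T = k}"
  have "?Adm \<subseteq> ?K" "finite ?K"
    using \<open>n = blk_off l r m\<close> by (auto simp: admissible_def)
  have "finite \<Omega>"
    using finite_index_set[of l m r] by (simp add: \<Omega>_def finite_PiE)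
  have "finite ?Adm"
    using \<open>?Adm \<subseteq> ?K\<close> \<open>finite ?K\<close> by (rule finite_subset)
  have sub: "{(\<alpha>, \<beta>) \<in> \<Omega>. \<not> is_PMDS k l m r (row_space k n (genmat k l m r \<alpha> \<beta>))} \<subseteq> (\<Union>T\<in>?Adm. bad T)"
  proof (clarify)
    fix \<alpha> \<beta> assume "(\<alpha>, \<beta>) \<in> \<Omega>" "\<not> is_PMDS k l m r (row_space k n (genmat k l m r \<alpha> \<beta>))"
    then obtain T where "admissible k l m r T" "\<not> independent_cols k (genmat k l m r \<alpha> \<beta>) T"
      using is_PMDS_if_admissible_independent[OF assms(1,2) \<open>k < m * l\<close>] n by blast
    with \<open>(\<alpha>, \<beta>) \<in> \<Omega>\<close> show "(\<alpha>, \<beta>) \<in> (\<Union>T\<in>?Adm. bad T)"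
      by (auto simp: bad_def)
  qed
  have "finite (\<Union>T\<in>?Adm. bad T)"
    using \<open>finite \<Omega>\<close> by (rule finite_subset[rotated]) (auto simp: bad_def)
  then have "card {(\<alpha>, \<beta>) \<in> \<Omega>. \<not> is_PMDS k l m r (row_space k n (genmat k l m r \<alpha> \<beta>))}
      \<le> card (\<Union>T\<in>?Adm. bad T)"
    using sub by (rule card_mono)
  also have "\<dots> \<le> (\<Sum>T\<in>?Adm. card (bad T))"
    using \<open>finite ?Adm\<close> by (rule card_UN_le)
  finally have "card {(\<alpha>, \<beta>) \<in> \<Omega>. \<not> is_PMDS k l m r (row_space k n (genmat k l m r \<alpha> \<beta>))}
      \<le> (\<Sum>T\<in>?Adm. card (bad T))" .
  then have "card {(\<alpha>, \<beta>) \<in> \<Omega>. \<not> is_PMDS k l m r (row_space k n (genmat k l m r \<alpha> \<beta>))}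
      * card (UNIV :: 'a set) \<le> (\<Sum>T\<in>?Adm. card (bad T)) * card (UNIV :: 'a set)"
    by (rule mult_right_mono) simp
  also have "\<dots> = (\<Sum>T\<in>?Adm. card (bad T) * card (UNIV :: 'a set))"
    by (rule sum_distrib_right)
  also have "\<dots> \<le> (\<Sum>T\<in>?Adm. 2 * card (T - unit_cols k l m r) * card \<Omega>)"
    using card_not_independent_cols_le[OF assms(3)] by (intro sum_mono) (simp add: bad_def \<Omega>_def)
  also have "\<dots> \<le> (\<Sum>T\<in>?K. 2 * card (T - unit_cols k l m r) * card \<Omega>)"
    by (rule sum_mono2[OF \<open>finite ?K\<close> \<open>?Adm \<subseteq> ?K\<close>]) simp
  also have "\<dots> = 2 * card \<Omega> * (\<Sum>T\<in>?K. card (T - unit_cols k l m r))"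
    by (simp add: sum_distrib_left mult_ac)
  also have "(\<Sum>T\<in>?K. card (T - unit_cols k l m r)) = (n - k) * ((n - 1) choose (k - 1))"
    using sum_card_Diff_subsets[of "{0..<n}" "unit_cols k l m r" k] unit_cols_subset_card[of k m l r]
      \<open>k < m * l\<close> \<open>1 \<le> k\<close> \<open>n = blk_off l r m\<close> by simp
  finally show ?thesis
    by (simp add: mult_ac)
qed

lemma ratio_ge_if_card_not_le:
  fixes \<Omega> :: "('x \<times> 'y) set" and b q :: nat
  assumes "finite \<Omega>" "\<Omega> \<noteq> {}" "0 < q" "card {(x, y) \<in> \<Omega>. \<not> P x y} * q \<le> b * card \<Omega>"
  shows "real (card {(x, y) \<in> \<Omega>. P x y}) / real (card \<Omega>) \<ge> 1 - real b / real q"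
proof -
  let ?G = "{(x, y) \<in> \<Omega>. P x y}" and ?B = "{(x, y) \<in> \<Omega>. \<not> P x y}"
  have "?G \<subseteq> \<Omega>" "?B \<subseteq> \<Omega>"
    by auto
  then have "finite ?G" "finite ?B"
    using assms(1) finite_subset by blast+
  moreover have "?G \<inter> ?B = {}"
    by auto
  ultimately have "card (?G \<union> ?B) = card ?G + card ?B"
    by (rule card_Un_disjoint)
  moreover have "?G \<union> ?B = \<Omega>"
    by auto
  ultimately have "real (card \<Omega>) = real (card ?G) + real (card ?B)"
    by simp
  then have "real q * real (card \<Omega>) = real q * real (card ?G) + real (card ?B) * real q"
    by (simp add: algebra_simps)
  also have "\<dots> \<le> real q * real (card ?G) + real b * real (card \<Omega>)"
    using assms(4) by (simp flip: of_nat_mult)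
  finally have "real q * real (card \<Omega>) \<le> real q * real (card ?G) + real b * real (card \<Omega>)" .
  moreover have "0 < real (card \<Omega>)"
    using assms(1,2) by (simp add: card_gt_0_iff)
  ultimately show ?thesis
    using assms(3) by (simp add: field_simps)
qed

theorem theorem20:
  fixes m s l k n :: nat and r :: "nat \<Rightarrow> nat"
  assumes "m \<ge> 2" and "s \<ge> 1" and "l \<ge> 1" and "\<forall>i<m. r i \<ge> 1"
    and "k = m * l - s" and "k \<ge> l"
    and "n = (\<Sum>i<m. l + r i)"
  shows "real (card {(\<alpha>, \<beta>) \<in>
              ({0..<k} \<times> {0..<s} \<rightarrow>\<^sub>E (UNIV :: 'a::{finite,field} set)) \<times>
              ({(t, i, j). t < l \<and> i < m \<and> j < r i} \<rightarrow>\<^sub>E (UNIV :: 'a set)).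
              is_PMDS k l m r (row_space k n (genmat k l m r \<alpha> \<beta>))})
         / real (card (({0..<k} \<times> {0..<s} \<rightarrow>\<^sub>E (UNIV :: 'a::{finite,field} set)) \<times>
              ({(t, i, j). t < l \<and> i < m \<and> j < r i} \<rightarrow>\<^sub>E (UNIV :: 'a set))))
       \<ge> 1 - 2 * real (n - k) * real ((n - 1) choose (k - 1)) / real (card (UNIV :: 'a set))"
proof -
  have "k + s = m * l"
    using assms(3,5,6) by simp
  have "finite (({0..<k} \<times> {0..<s} \<rightarrow>\<^sub>E (UNIV :: 'a set)) \<times>
      ({(t, i, j). t < l \<and> i < m \<and> j < r i} \<rightarrow>\<^sub>E (UNIV :: 'a set)))"
    using finite_index_set[of l m r] by (simp add: finite_PiE)
  moreover have "({0..<k} \<times> {0..<s} \<rightarrow>\<^sub>E (UNIV :: 'a set)) \<times>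
      ({(t, i, j). t < l \<and> i < m \<and> j < r i} \<rightarrow>\<^sub>E (UNIV :: 'a set)) \<noteq> {}"
    by (simp add: PiE_eq_empty_iff)
  ultimately show ?thesis
    using ratio_ge_if_card_not_le[OF _ _ finite_UNIV_card_ge_0
        card_not_PMDS_le[OF assms(3,6) \<open>k + s = m * l\<close> assms(2,7)]]
    by simp
qed

end
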